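(* Suppose Assumption A holds and Assumption B holds with $p=3$. Define $M_3=4\big(f(x^0)-f_{\mathrm{low}}+19\sigma^2+L_1+4L_3^2+2\big)$. Let $\{x^k\}_{k\ge0}$ be generated by Algorithm 1 with $q=2$ and, for all $k\ge0$, \[ \eta_k=\frac{1}{(k+3)^{7/10}},\quad \gamma_{k,1}=\frac{1}{(k+3)^{3/5}},\quad \gamma_{k,2}=\frac{1}{2(k+3)^{3/5}},\quad \theta_{k,1}=\frac{2(k+3)^{3/5}-1}{(k+3)^{6/5}},\quad \theta_{k,2}=\frac{1-(k+3)^{3/5}}{2(k+3)^{6/5}}. \] For $K\ge1$ let $\iota_K$ be drawn uniformly from $\{0,\dots,K-1\}$, independently of the algorithm. Then for every $\epsilon\in(0,1)$, \[ \mathbb{E}[\|\nabla f(x^{\iota_K})\|]\le\epsilon\qquad\text{for all } K\ge\max\Big\{\Big(\frac{20M_3}{3\epsilon}\ln\Big(\frac{20M_3}{3\epsilon}\Big)\Big)^{10/3},\,5\Big\}, \] where the expectation is over the randomness of the algorithm and of $\iota_K$.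
   Context: Problem: minimize $f:\mathbb{R}^n\to\mathbb{R}$, where only a stochastic gradient estimator $G(\cdot;\xi)$ is accessible, $\xi$ being a random variable with sample space $\Xi$. $\|\cdot\|$ is the Euclidean norm. Assumption A: (a) there is a finite $f_{\mathrm{low}}$ with $f(x)\ge f_{\mathrm{low}}$ for all $x$; (b) there is $L_1>0$ with $\|\nabla f(y)-\nabla f(x)\|\le L_1\|y-x\|$ for all $x,y$; (c) $\mathbb{E}_\xi[G(x;\xi)]=\nabla f(x)$ and $\mathbb{E}_\xi[\|G(x;\xi)-\nabla f(x)\|^2]\le\sigma^2$ for all $x$, for some $\sigma>0$. Assumption B: $f$ is $p$ times continuously differentiable for some $p\ge2$ and there is $L_p>0$ with $\|D^pf(y)-D^pf(x)\|_{(p)}\le L_p\|y-x\|$ for all $x,y$, where $D^pf(x)$ is the $p$th derivative as a symmetric $p$-linear form and $\|\mathcal{T}\|_{(p)}=\max\{\mathcal{T}[h_1,\dots,h_p]:\|h_i\|\le 1\}$. Algorithm 1 (SFOM with multi-extrapolated momentum): inputs $x^0\in\mathbb{R}^n$, step sizes $\eta_k>0$, an integer $q\ge1$, extrapolation parameters $\gamma_{k,t}\in(0,1)$ and weighting parameters $\theta_{k,t}\in\mathbb{R}$ ($1\le t\le q$, $k\ge0$) with $\sum_{t=1}^q\theta_{k,t}\in(0,1)$ for all $k\ge0$. Initialize $x^{-1}=x^0$, $m^{-1}=0$, $(\gamma_{-1,t},\theta_{-1,t})=(1,1/q)$ for all $t$. For $k=0,1,2,\dots$: $z^{k,t}=x^k+\frac{1-\gamma_{k-1,t}}{\gamma_{k-1,t}}(x^k-x^{k-1})$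 for $1\le t\le q$; $m^k=(1-\sum_{t=1}^q\theta_{k-1,t})m^{k-1}+\sum_{t=1}^q\theta_{k-1,t}G(z^{k,t};\xi^k)$; $x^{k+1}=x^k-\eta_k m^k/\|m^k\|$. Here $\xi^0,\xi^1,\dots$ are independent samples of $\xi$ (and $m^k\neq0$ is implicitly assumed). *)

theory Defs
  imports "HOL-Probability.Probability"
begin

text \<open>The norm of a p-linear form T is
max T[h1,...,hp] over unit-ball vectors; bounding it by c is literally
the statement that T[h1,...,hp] \<le> c for all such h.\<close>

definition assumptionB3 ::
  "('a::euclidean_space \<Rightarrow> real) \<Rightarrow> ('a \<Rightarrow> 'a) \<Rightarrow> real \<Rightarrow> bool" where
  "assumptionB3 f g L3 \<longleftrightarrow> L3 > 0 \<and>
    (\<forall>x. (f has_derivative (\<lambda>h. g x \<bullet> h)) (at x)) \<and>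
    (\<exists>D2 D3 :: 'a \<Rightarrow> 'a \<Rightarrow> 'a \<Rightarrow> _.
      (\<forall>x h1. ((\<lambda>y. g y \<bullet> h1) has_derivative (\<lambda>h2. D2 x h1 h2)) (at x)) \<and>
      (\<forall>x h1 h2. ((\<lambda>y. D2 y h1 h2) has_derivative (\<lambda>h3. D3 x h1 h2 h3)) (at x)) \<and>
      (\<forall>h1 h2 h3. continuous_on UNIV (\<lambda>x. D3 x h1 h2 h3)) \<and>
      (\<forall>x y h1 h2 h3. norm h1 \<le> 1 \<longrightarrow> norm h2 \<le> 1 \<longrightarrow> norm h3 \<le> 1 \<longrightarrow>
          D3 y h1 h2 h3 - D3 x h1 h2 h3 \<le> L3 * norm (y - x)))"

text \<open>Parameters at index k-1 as used in iteration k; index -1 corresponds to k = 0,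
where (gamma, theta) = (1, 1/q).\<close>

definition gam_prev :: "(nat \<Rightarrow> nat \<Rightarrow> real) \<Rightarrow> nat \<Rightarrow> nat \<Rightarrow> real" where
  "gam_prev \<gamma> k t = (if k = 0 then 1 else \<gamma> (k - 1) t)"

definition the_prev :: "nat \<Rightarrow> (nat \<Rightarrow> nat \<Rightarrow> real) \<Rightarrow> nat \<Rightarrow> nat \<Rightarrow> real" where
  "the_prev q \<theta> k t = (if k = 0 then 1 / real q else \<theta> (k - 1) t)"

text \<open>State at step k: (x^k, x^(k-1), m^(k-1)).\<close>

primrec sfom_state ::
  "('a::real_normed_vector \<Rightarrow> 'b \<Rightarrow> 'a) \<Rightarrow> (nat \<Rightarrow> 'w \<Rightarrow> 'b) \<Rightarrow> (nat \<Rightarrow> real) \<Rightarrow> nat \<Rightarrow>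
   (nat \<Rightarrow> nat \<Rightarrow> real) \<Rightarrow> (nat \<Rightarrow> nat \<Rightarrow> real) \<Rightarrow> 'a \<Rightarrow> nat \<Rightarrow> 'w \<Rightarrow> 'a \<times> 'a \<times> 'a" where
  "sfom_state G \<xi> \<eta> q \<gamma> \<theta> x0 0 \<omega> = (x0, x0, 0)"
| "sfom_state G \<xi> \<eta> q \<gamma> \<theta> x0 (Suc k) \<omega> =
    (let (x, xp, mp) = sfom_state G \<xi> \<eta> q \<gamma> \<theta> x0 k \<omega>;
         z = (\<lambda>t. x + ((1 - gam_prev \<gamma> k t) / gam_prev \<gamma> k t) *\<^sub>R (x - xp));
         m = (1 - (\<Sum>t=1..q. the_prev q \<theta> k t)) *\<^sub>R mp
             + (\<Sum>t=1..q. the_prev q \<theta> k t *\<^sub>R G (z t) (\<xi> k \<omega>))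
     in (x - (\<eta> k / norm m) *\<^sub>R m, x, m))"

definition sfom_x where
  "sfom_x G \<xi> \<eta> q \<gamma> \<theta> x0 k \<omega> = fst (sfom_state G \<xi> \<eta> q \<gamma> \<theta> x0 k \<omega>)"

definition sfom_m where
  "sfom_m G \<xi> \<eta> q \<gamma> \<theta> x0 k \<omega> = snd (snd (sfom_state G \<xi> \<eta> q \<gamma> \<theta> x0 (Suc k) \<omega>))"

end

theory Submission
  imports Defs
begin

text \<open>Write \<open>e\<^sub>k = m\<^sup>k - \<nabla>f(x\<^sup>k)\<close>. Since every step has length \<open>\<eta>\<^sub>k\<close>, the \<open>L\<^sub>1\<close>-smoothness
of \<open>f\<close> gives the descent inequality
\<open>\<eta>\<^sub>k \<parallel>\<nabla>f(x\<^sup>k)\<parallel> \<le> f(x\<^sup>k) - f(x\<^sup>k\<^sup>+\<^sup>1) + 2 \<eta>\<^sub>k \<parallel>e\<^sub>k\<parallel> + L\<^sub>1 \<eta>\<^sub>k\<^sup>2\<close>, so everything reduces to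
bounding \<open>E \<parallel>e\<^sub>k\<parallel>\<close>. The extrapolation points lie at \<open>x\<^sup>k\<^sup>+\<^sup>1 + (s - 1) d\<close> and
\<open>x\<^sup>k\<^sup>+\<^sup>1 + (2 s - 1) d\<close> with \<open>d = x\<^sup>k\<^sup>+\<^sup>1 - x\<^sup>k\<close> and \<open>s = (k + 3)\<^sup>3\<^sup>/\<^sup>5\<close>, and the weights
\<open>\<theta>\<close> are chosen so that in \<open>e\<^sub>k\<^sub>+\<^sub>1 - (1 - \<Sigma>\<theta>) e\<^sub>k\<close> the gradient differences cancel to
first and second order; by the Lipschitz third derivative the remaining deterministic
part is at most \<open>L\<^sub>3 \<eta>\<^sub>k\<^sup>3 s\<^sup>2\<close>. The stochastic part is unbiased and independent of the
past, which yields \<open>E\<parallel>e\<^sub>k\<^sub>+\<^sub>1\<parallel>\<^sup>2 \<le> (1 - 1/s) E\<parallel>e\<^sub>k\<parallel>\<^sup>2 + O(1/s\<^sup>2)\<close> and hence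
\<open>E\<parallel>e\<^sub>k\<parallel>\<^sup>2 = O((k + 2)\<^sup>-\<^sup>3\<^sup>/\<^sup>5)\<close>. Summing the descent inequality bounds
\<open>\<Sigma>\<^sub>k<K \<eta>\<^sub>k E\<parallel>\<nabla>f(x\<^sup>k)\<parallel>\<close> by \<open>O(ln K)\<close>, and \<open>\<eta>\<^sub>K\<^sub>-\<^sub>1 K \<approx> K\<^sup>3\<^sup>/\<^sup>1\<^sup>0\<close> gives the rate.\<close>

section \<open>Real-analysis estimates\<close>

lemma taylor2_lipschitz_remainder_nonneg:
  fixes \<phi> \<phi>1 \<psi> :: "real \<Rightarrow> real"
  assumes d1: "\<And>t. (\<phi> has_real_derivative \<phi>1 t) (at t)"
    and d2: "\<And>t. (\<phi>1 has_real_derivative \<psi> t) (at t)"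
    and lip: "\<And>t. t \<ge> 0 \<Longrightarrow> \<bar>\<psi> t - \<psi> 0\<bar> \<le> L * t"
    and s: "s \<ge> 0"
  shows "\<bar>\<phi> s - \<phi> 0 - s * \<phi>1 0 - s^2/2 * \<psi> 0\<bar> \<le> L * s^3 / 6"
proof -
  have upper: "\<phi> s - \<phi> 0 - s * \<phi>1 0 - s^2/2 * \<psi> 0 - L * s^3/6 \<le> 0"
  proof -
    define R1 where "R1 t = \<phi>1 t - \<phi>1 0 - t * \<psi> 0 - L * t^2/2" for t
    define R where "R t = \<phi> t - \<phi> 0 - t * \<phi>1 0 - t^2/2 * \<psi> 0 - L * t^3/6" for t
    have dR1: "(R1 has_real_derivative (\<psi> t - \<psi> 0 - L * t)) (at t)" for t
      unfolding R1_def by (auto intro!: derivative_eq_intros d2)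
    have dR: "(R has_real_derivative R1 t) (at t)" for t
      unfolding R_def R1_def
      by (auto intro!: derivative_eq_intros d1 simp: field_simps power2_eq_square)
    have R1_nonpos: "R1 t \<le> 0" if "0 \<le> t" "t \<le> s" for t
    proof -
      have "R1 t \<le> R1 0"
        by (rule deriv_nonpos_imp_antimono[OF dR1]) (use lip that in \<open>force simp: abs_le_iff\<close>)+
      then show ?thesis by (simp add: R1_def)
    qed
    have "R s \<le> R 0"
      by (rule deriv_nonpos_imp_antimono[OF dR]) (use R1_nonpos s in auto)
    then show ?thesis by (simp add: R_def)
  qed
  have lower: "\<phi> s - \<phi> 0 - s * \<phi>1 0 - s^2/2 * \<psi> 0 + L * s^3/6 \<ge> 0"
  proof -
    define R1 where "R1 t = \<phi>1 t - \<phi>1 0 - t * \<psi> 0 + L * t^2/2" for t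
    define R where "R t = \<phi> t - \<phi> 0 - t * \<phi>1 0 - t^2/2 * \<psi> 0 + L * t^3/6" for t
    have dR1: "(R1 has_real_derivative (\<psi> t - \<psi> 0 + L * t)) (at t)" for t
      unfolding R1_def by (auto intro!: derivative_eq_intros d2)
    have dR: "(R has_real_derivative R1 t) (at t)" for t
      unfolding R_def R1_def
      by (auto intro!: derivative_eq_intros d1 simp: field_simps power2_eq_square)
    have R1_nonneg: "R1 t \<ge> 0" if "0 \<le> t" "t \<le> s" for t
    proof -
      have "R1 0 \<le> R1 t"
        by (rule deriv_nonneg_imp_mono[OF dR1]) (use lip that in \<open>force simp: abs_le_iff\<close>)+
      then show ?thesis by (simp add: R1_def)
    qed
    have "R 0 \<le> R s"
      by (rule deriv_nonneg_imp_mono[OF dR]) (use R1_nonneg s in auto)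
    then show ?thesis by (simp add: R_def)
  qed
  show ?thesis using upper lower by (simp only: abs_le_iff) linarith
qed

lemma taylor2_lipschitz_remainder:
  fixes \<phi> \<phi>1 \<psi> :: "real \<Rightarrow> real"
  assumes d1: "\<And>t. (\<phi> has_real_derivative \<phi>1 t) (at t)"
    and d2: "\<And>t. (\<phi>1 has_real_derivative \<psi> t) (at t)"
    and lip: "\<And>t. \<bar>\<psi> t - \<psi> 0\<bar> \<le> L * \<bar>t\<bar>"
  shows "\<bar>\<phi> s - \<phi> 0 - s * \<phi>1 0 - s^2/2 * \<psi> 0\<bar> \<le> L * \<bar>s\<bar>^3 / 6"
proof (cases "s \<ge> 0")
  case True
  have "\<bar>\<phi> s - \<phi> 0 - s * \<phi>1 0 - s^2/2 * \<psi> 0\<bar> \<le> L * s^3 / 6"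
    by (rule taylor2_lipschitz_remainder_nonneg[OF d1 d2])
       (use lip True in \<open>auto\<close>, metis abs_of_nonneg)
  then show ?thesis using True by simp
next
  case False
  define \<phi>' where "\<phi>' = (\<lambda>t. \<phi> (-t))"
  define \<phi>1' where "\<phi>1' = (\<lambda>t. - \<phi>1 (-t))"
  define \<psi>' where "\<psi>' = (\<lambda>t. \<psi> (-t))"
  have d1': "(\<phi>' has_real_derivative \<phi>1' t) (at t)" for t
  proof -
    have "((\<lambda>x. \<phi> (- x)) has_real_derivative \<phi>1 (-t) * -1) (at t)"
      by (rule DERIV_chain2[OF d1]) (auto intro!: derivative_eq_intros)
    then show ?thesis by (simp add: \<phi>'_def \<phi>1'_def)
  qed
  have d2': "(\<phi>1' has_real_derivative \<psi>' t) (at t)" for t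
  proof -
    have "((\<lambda>x. \<phi>1 (- x)) has_real_derivative \<psi> (-t) * -1) (at t)"
      by (rule DERIV_chain2[OF d2]) (auto intro!: derivative_eq_intros)
    from DERIV_minus[OF this] show ?thesis by (simp add: \<psi>'_def \<phi>1'_def)
  qed
  have "\<bar>\<phi>' (-s) - \<phi>' 0 - (-s) * \<phi>1' 0 - (-s)^2/2 * \<psi>' 0\<bar> \<le> L * (-s)^3 / 6"
    by (rule taylor2_lipschitz_remainder_nonneg[OF d1' d2'])
       (use lip False in \<open>auto simp: \<psi>'_def\<close>, metis abs_minus_cancel abs_of_nonneg)
  then show ?thesis using False by (simp add: \<phi>'_def \<phi>1'_def \<psi>'_def)
qed

lemma has_real_derivative_along_line:
  fixes F :: "'a::real_normed_vector \<Rightarrow> real"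
  assumes "\<And>y. (F has_derivative DF y) (at y)"
  shows "((\<lambda>t. F (x + t *\<^sub>R u)) has_real_derivative DF (x + t *\<^sub>R u) u) (at t)"
proof -
  have l: "linear (DF (x + t *\<^sub>R u))"
    using assms has_derivative_bounded_linear bounded_linear.linear by blast
  have "((\<lambda>t. F (x + t *\<^sub>R u)) has_derivative (\<lambda>t'. DF (x + t *\<^sub>R u) (t' *\<^sub>R u))) (at t)"
    by (rule has_derivative_compose[of "\<lambda>t. x + t *\<^sub>R u", OF _ assms])
       (auto intro!: derivative_eq_intros)
  moreover have "(\<lambda>t'. DF (x + t *\<^sub>R u) (t' *\<^sub>R u)) = (*) (DF (x + t *\<^sub>R u) u)"
    using linear_cmul[OF l] by (auto simp: fun_eq_iff)
  ultimately show ?thesis by (simp add: has_field_derivative_def)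
qed

lemma gradient_taylor2_along_line:
  fixes g :: "'a::euclidean_space \<Rightarrow> 'a"
  assumes dg: "\<forall>x h1. ((\<lambda>y. g y \<bullet> h1) has_derivative (\<lambda>h2. D2 x h1 h2)) (at x)"
    and dD2: "\<forall>x h1 h2. ((\<lambda>y. D2 y h1 h2) has_derivative (\<lambda>h3. D3 x h1 h2 h3)) (at x)"
    and lip: "\<forall>x y h1 h2 h3. norm h1 \<le> 1 \<longrightarrow> norm h2 \<le> 1 \<longrightarrow> norm h3 \<le> 1 \<longrightarrow>
          D3 y h1 h2 h3 - D3 x h1 h2 h3 \<le> L3 * norm (y - x)"
    and u: "norm u \<le> 1" and h: "norm h \<le> 1" and L3: "L3 \<ge> 0"
  shows "\<bar>g (x + s *\<^sub>R u) \<bullet> h - g x \<bullet> h - s * D2 x h u - s^2/2 * D3 x h u u\<bar> \<le> L3 * \<bar>s\<bar>^3/6"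
proof -
  have d1: "((\<lambda>t. g (x + t *\<^sub>R u) \<bullet> h) has_real_derivative D2 (x + t *\<^sub>R u) h u) (at t)" for t
    by (rule has_real_derivative_along_line[of "\<lambda>y. g y \<bullet> h" "\<lambda>y h2. D2 y h h2"]) (use dg in auto)
  have d2: "((\<lambda>t. D2 (x + t *\<^sub>R u) h u) has_real_derivative D3 (x + t *\<^sub>R u) h u u) (at t)" for t
    by (rule has_real_derivative_along_line[of "\<lambda>y. D2 y h u" "\<lambda>y h3. D3 y h u h3"]) (use dD2 in auto)
  have lip_line: "\<bar>D3 (x + t *\<^sub>R u) h u u - D3 (x + 0 *\<^sub>R u) h u u\<bar> \<le> L3 * \<bar>t\<bar>" for t
  proof -
    have "D3 (x + t *\<^sub>R u) h u u - D3 x h u u \<le> L3 * norm (t *\<^sub>R u)"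
      using lip u h by (metis add_diff_cancel_left')
    moreover have "D3 x h u u - D3 (x + t *\<^sub>R u) h u u \<le> L3 * norm (t *\<^sub>R u)"
      using lip u h by (metis add_diff_cancel_left' norm_minus_commute)
    moreover have "L3 * norm (t *\<^sub>R u) \<le> L3 * \<bar>t\<bar>"
      using u L3 by (simp add: mult_left_le mult_left_mono)
    ultimately show ?thesis by simp
  qed
  show ?thesis
    using taylor2_lipschitz_remainder[OF d1 d2 lip_line, of s] by simp
qed

text \<open>The two linear constraints on the coefficients annihilate the first- and
second-order Taylor terms of the three gradient differences, so only the cubic
remainders survive.\<close>

lemma third_order_difference_bound:
  fixes g :: "'a::euclidean_space \<Rightarrow> 'a"
  assumes dg: "\<forall>x h1. ((\<lambda>y. g y \<bullet> h1) has_derivative (\<lambda>h2. D2 x h1 h2)) (at x)"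
    and dD2: "\<forall>x h1 h2. ((\<lambda>y. D2 y h1 h2) has_derivative (\<lambda>h3. D3 x h1 h2 h3)) (at x)"
    and lip: "\<forall>x y h1 h2 h3. norm h1 \<le> 1 \<longrightarrow> norm h2 \<le> 1 \<longrightarrow> norm h3 \<le> 1 \<longrightarrow>
          D3 y h1 h2 h3 - D3 x h1 h2 h3 \<le> L3 * norm (y - x)"
    and L3: "L3 \<ge> 0"
    and e1: "- c0 + c1 * a1 + c2 * a2 = 0" and e2: "c0 + c1 * a1^2 + c2 * a2^2 = 0"
  shows "norm (c0 *\<^sub>R (g (x - d) - g x) + c1 *\<^sub>R (g (x + a1 *\<^sub>R d) - g x)
                + c2 *\<^sub>R (g (x + a2 *\<^sub>R d) - g x))
     \<le> L3 * norm d ^ 3 / 6 * (\<bar>c0\<bar> + \<bar>c1\<bar> * \<bar>a1\<bar>^3 + \<bar>c2\<bar> * \<bar>a2\<bar>^3)"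
    (is "norm ?E \<le> ?R")
proof (cases "d = 0 \<or> ?E = 0")
  case True
  then show ?thesis using L3 by auto
next
  case False
  then have d: "d \<noteq> 0" and E: "?E \<noteq> 0" by auto
  define nd where "nd = norm d"
  have nd: "nd > 0" using d by (simp add: nd_def)
  define u where "u = d /\<^sub>R nd"
  have u: "norm u = 1" using nd by (simp add: u_def nd_def)
  have du: "d = nd *\<^sub>R u" using nd by (simp add: u_def)
  define h where "h = ?E /\<^sub>R norm ?E"
  have h: "norm h = 1" using E by (simp add: h_def)
  have nE: "norm ?E = ?E \<bullet> h" using E by (simp add: h_def dot_square_norm power2_eq_square)
  define P where "P = D2 x h u"
  define Q where "Q = D3 x h u u"
  define T where "T s = g (x + s *\<^sub>R u) \<bullet> h - g x \<bullet> h - s * P - s^2/2 * Q" for s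
  have T: "\<bar>T s\<bar> \<le> L3 * \<bar>s\<bar>^3/6" for s
    unfolding T_def P_def Q_def by (rule gradient_taylor2_along_line[OF dg dD2 lip]) (use u h L3 in auto)
  have "?E \<bullet> h = c0 * (T (- nd) + (-nd) * P + (-nd)^2/2 * Q)
     + c1 * (T (a1*nd) + (a1*nd) * P + (a1*nd)^2/2 * Q) + c2 * (T (a2*nd) + (a2*nd) * P + (a2*nd)^2/2 * Q)"
    unfolding T_def by (simp add: du inner_add_left inner_diff_left algebra_simps)
  also have "\<dots> = c0 * T (- nd) + c1 * T (a1*nd) + c2 * T (a2*nd)
     + nd * P * (- c0 + c1 * a1 + c2 * a2) + nd^2/2 * Q * (c0 + c1 * a1^2 + c2 * a2^2)"
    by (simp add: algebra_simps power2_eq_square)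
  also have "\<dots> = c0 * T (- nd) + c1 * T (a1*nd) + c2 * T (a2*nd)"
    using e1 e2 by simp
  also have "\<dots> \<le> \<bar>c0\<bar> * \<bar>T (- nd)\<bar> + \<bar>c1\<bar> * \<bar>T (a1*nd)\<bar> + \<bar>c2\<bar> * \<bar>T (a2*nd)\<bar>"
    by (intro add_mono; metis abs_ge_self abs_mult)
  also have "\<dots> \<le> \<bar>c0\<bar> * (L3 * \<bar>-nd\<bar>^3/6) + \<bar>c1\<bar> * (L3 * \<bar>a1*nd\<bar>^3/6) + \<bar>c2\<bar> * (L3 * \<bar>a2*nd\<bar>^3/6)"
    by (intro add_mono mult_left_mono T) auto
  also have "\<dots> = ?R"
    using nd by (simp add: nd_def abs_mult power_mult_distrib algebra_simps)
  finally show ?thesis using nE by simp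
qed

lemma lipschitz_gradient_descent_le:
  fixes f :: "'a::euclidean_space \<Rightarrow> real"
  assumes grad: "\<forall>x. (f has_derivative (\<lambda>h. g x \<bullet> h)) (at x)"
    and lip: "\<forall>x y. norm (g y - g x) \<le> L * norm (y - x)" and L: "L \<ge> 0"
  shows "f y \<le> f x + g x \<bullet> (y - x) + L * (norm (y - x))^2"
proof -
  have d: "((\<lambda>t. f (x + t *\<^sub>R (y - x))) has_real_derivative g (x + t *\<^sub>R (y - x)) \<bullet> (y - x)) (at t)" for t
    by (rule has_real_derivative_along_line[of f "\<lambda>z h. g z \<bullet> h"]) (use grad in auto)
  obtain t where t: "0 < t" "t < 1"
    and eq: "f (x + 1 *\<^sub>R (y - x)) - f (x + 0 *\<^sub>R (y - x)) = (1 - 0) * (g (x + t *\<^sub>R (y - x)) \<bullet> (y - x))"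
    using MVT2[of 0 1 "\<lambda>t. f (x + t *\<^sub>R (y - x))" "\<lambda>t. g (x + t *\<^sub>R (y - x)) \<bullet> (y - x)"] d by auto
  have "g (x + t *\<^sub>R (y - x)) \<bullet> (y - x) - g x \<bullet> (y - x) = (g (x + t *\<^sub>R (y - x)) - g x) \<bullet> (y - x)"
    by (simp add: inner_diff_left)
  also have "\<dots> \<le> norm (g (x + t *\<^sub>R (y - x)) - g x) * norm (y - x)"
    by (rule Cauchy_Schwarz_ineq2[THEN order_trans[OF abs_ge_self]])
  also have "\<dots> \<le> (L * norm (t *\<^sub>R (y - x))) * norm (y - x)"
    using lip[rule_format, of x "x + t *\<^sub>R (y - x)"]
    by (intro mult_right_mono) (auto simp: norm_minus_commute)
  also have "\<dots> \<le> L * (norm (y - x))^2"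
    using t L by (simp add: power2_eq_square mult.assoc mult_left_mono mult_left_le_one_le)
  finally show ?thesis using eq by simp
qed

lemma weighted_square_le:
  fixes w1 w2 x1 x2 :: real
  assumes "w1 \<ge> 0" "w2 \<ge> 0"
  shows "(w1*x1 + w2*x2)^2 \<le> (w1+w2)*(w1*x1^2 + w2*x2^2)"
proof -
  have "(w1+w2)*(w1*x1^2 + w2*x2^2) - (w1*x1 + w2*x2)^2 = w1*w2*(x1-x2)^2"
    by (simp add: power2_eq_square algebra_simps)
  moreover have "w1*w2*(x1-x2)^2 \<ge> 0" using assms by simp
  ultimately show ?thesis by linarith
qed

lemma square_sum_le_weighted:
  fixes a b s :: real
  assumes "s > 0"
  shows "(a + b)^2 \<le> (1 + 1/s) * a^2 + (1 + s) * b^2"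
proof -
  have "(1 + 1/s) * a^2 + (1 + s) * b^2 - (a + b)^2 = (a - s * b)^2 / s"
    using assms by (simp add: field_simps power2_eq_square)
  moreover have "(a - s * b)^2 / s \<ge> 0" using assms by simp
  ultimately show ?thesis by linarith
qed

lemma harmonic_shift_le_ln: "(\<Sum>k<K. 1 / (real k + 2)) \<le> ln (real K + 1)"
proof (induction K)
  case 0
  then show ?case by simp
next
  case (Suc K)
  have "ln ((real K + 1) / (real K + 2)) \<le> (real K + 1) / (real K + 2) - 1"
    by (rule ln_le_minus_one) auto
  then have "1 / (real K + 2) \<le> ln (real K + 2) - ln (real K + 1)"
    by (simp add: ln_div field_simps)
  with Suc show ?case by (simp add: add_ac)
qed

lemma ln_le_of_ge_mul_ln:
  fixes c y :: real
  assumes c: "c \<ge> 3" and y: "y \<ge> c * ln c"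
  shows "ln y \<le> 2 * y / c"
proof -
  have lc: "ln c \<ge> 1"
  proof -
    have "exp 1 \<le> c" using exp_le c by linarith
    then show ?thesis using c by (subst ln_ge_iff) auto
  qed
  have cp: "c > 0" using c by simp
  have clp: "c * ln c > 0" using lc cp by (metis mult_pos_pos less_le_trans zero_less_one)
  define u where "u = y / (c * ln c)"
  have u: "u \<ge> 1" unfolding u_def using y clp by simp
  have yu: "y = c * ln c * u" unfolding u_def using clp by (metis less_irrefl nonzero_mult_div_cancel_left times_divide_eq_right)
  have "ln y = ln c + ln (ln c) + ln u"
  proof -
    have "ln (c * ln c * u) = ln (c * ln c) + ln u" using clp lc u by (intro ln_mult_pos) auto
    also have "ln (c * ln c) = ln c + ln (ln c)" using c lc by (intro ln_mult_pos) auto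
    finally show ?thesis unfolding yu .
  qed
  also have "\<dots> \<le> ln c + (ln c - 1) + (u - 1)"
    using ln_le_minus_one[of "ln c"] ln_le_minus_one[of u] lc u by auto
  also have "\<dots> \<le> 2 * u * ln c"
  proof -
    have "(u - 1) * 1 \<le> (u - 1) * (2 * ln c)" using u lc by (intro mult_left_mono) auto
    then show ?thesis by (simp add: algebra_simps)
  qed
  also have "\<dots> = 2 * y / c" unfolding yu using cp by simp
  finally show ?thesis .
qed

section \<open>Independent samples and unbiased noise\<close>

lemma (in prob_space) nn_integral_le_affine:
  assumes "\<And>\<omega>. F \<omega> \<le> a * H \<omega> + b" and "\<And>\<omega>. 0 \<le> H \<omega>" and "0 \<le> a" and "0 \<le> b"
    and "H \<in> borel_measurable M"
  shows "(\<integral>\<^sup>+\<omega>. ennreal (F \<omega>) \<partial>M) \<le> ennreal a * (\<integral>\<^sup>+\<omega>. ennreal (H \<omega>) \<partial>M) + ennreal b"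
proof -
  have "(\<integral>\<^sup>+\<omega>. ennreal (F \<omega>) \<partial>M) \<le> (\<integral>\<^sup>+\<omega>. ennreal a * ennreal (H \<omega>) + ennreal b \<partial>M)"
    using assms by (intro nn_integral_mono)
      (simp add: ennreal_leI ennreal_mult[symmetric] ennreal_plus[symmetric] del: ennreal_plus)
  also have "\<dots> = ennreal a * (\<integral>\<^sup>+\<omega>. ennreal (H \<omega>) \<partial>M) + ennreal b"
    using assms by (simp add: nn_integral_add nn_integral_cmult emeasure_space_1)
  finally show ?thesis .
qed

lemma nn_integral_pair_uniform_lessThan:
  fixes h :: "nat \<Rightarrow> 'w \<Rightarrow> ennreal"
  assumes K: "K > 0" and h: "\<And>i. h i \<in> borel_measurable M"
  shows "(\<integral>\<^sup>+ (\<omega>, i). h i \<omega> \<partial>(M \<Otimes>\<^sub>M measure_pmf (pmf_of_set {..<K})))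
       = (\<integral>\<^sup>+\<omega>. (\<Sum>i<K. h i \<omega>) / of_nat K \<partial>M)"
proof -
  define U where "U = measure_pmf (pmf_of_set {..<K})"
  interpret U: prob_space U unfolding U_def by (rule prob_space_measure_pmf)
  have "snd \<in> measurable (M \<Otimes>\<^sub>M U) U" by (rule measurable_snd)
  moreover have "measurable (M \<Otimes>\<^sub>M U) U = measurable (M \<Otimes>\<^sub>M U) (count_space UNIV)"
    by (rule measurable_cong_sets) (simp_all add: U_def)
  ultimately have "snd \<in> measurable (M \<Otimes>\<^sub>M U) (count_space UNIV)" by simp
  then have "(\<lambda>p. (\<lambda>i p. h i (fst p)) (snd p) p) \<in> borel_measurable (M \<Otimes>\<^sub>M U)"
    by (rule measurable_compose_countable'[rotated]) (use h in measurable)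
  then have hm: "(\<lambda>(\<omega>, i). h i \<omega>) \<in> borel_measurable (M \<Otimes>\<^sub>M U)"
    by (simp add: split_beta')
  have "(\<integral>\<^sup>+ (\<omega>, i). h i \<omega> \<partial>(M \<Otimes>\<^sub>M U)) = (\<integral>\<^sup>+\<omega>. \<integral>\<^sup>+i. h i \<omega> \<partial>U \<partial>M)"
    using U.nn_integral_fst[OF hm] by simp
  also have "\<dots> = (\<integral>\<^sup>+\<omega>. (\<Sum>i<K. h i \<omega>) / of_nat K \<partial>M)"
  proof -
    have "{..<K} \<noteq> {}" using K by auto
    then show ?thesis by (simp add: U_def nn_integral_pmf_of_set)
  qed
  finally show ?thesis by (simp add: U_def)
qed

locale iid_sequence = P: prob_space M + Q: prob_space D
  for M :: "'w measure" and D :: "'b measure" +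
  fixes \<xi> :: "nat \<Rightarrow> 'w \<Rightarrow> 'b"
  assumes xi_distr: "\<forall>k. distr M D (\<xi> k) = D"
    and xi_indep: "P.indep_vars (\<lambda>_. D) \<xi> UNIV"
begin

lemma xi_measurable[measurable]: "\<xi> k \<in> measurable M D"
  using xi_indep unfolding P.indep_vars_def by auto

lemma nn_integral_indep_current:
  assumes h: "h \<in> borel_measurable (PiM {..<k} (\<lambda>_. D) \<Otimes>\<^sub>M D)"
  shows "(\<integral>\<^sup>+\<omega>. h (restrict (\<lambda>i. \<xi> i \<omega>) {..<k}, \<xi> k \<omega>) \<partial>M)
       = (\<integral>\<^sup>+\<omega>. (\<integral>\<^sup>+s. h (restrict (\<lambda>i. \<xi> i \<omega>) {..<k}, s) \<partial>D) \<partial>M)"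
proof -
  let ?P = "PiM {..<k} (\<lambda>_. D)" and ?Q = "PiM {k} (\<lambda>_. D)"
  let ?Y = "\<lambda>\<omega>. restrict (\<lambda>i. \<xi> i \<omega>) {..<k}" and ?Z = "\<lambda>\<omega>. restrict (\<lambda>i. \<xi> i \<omega>) {k}"
  have "P.indep_var ?P ?Y ?Q ?Z"
    by (rule P.indep_var_restrict[OF xi_indep]) auto
  then have prod: "distr M ?P ?Y \<Otimes>\<^sub>M distr M ?Q ?Z = distr M (?P \<Otimes>\<^sub>M ?Q) (\<lambda>\<omega>. (?Y \<omega>, ?Z \<omega>))"
    unfolding P.indep_var_distribution_eq by blast
  have Ym: "?Y \<in> measurable M ?P" and Zm: "?Z \<in> measurable M ?Q"
    and YZm: "(\<lambda>\<omega>. (?Y \<omega>, ?Z \<omega>)) \<in> measurable M (?P \<Otimes>\<^sub>M ?Q)" by measurable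
  have pk: "(\<lambda>w. w k) \<in> measurable ?Q D" by (rule measurable_component_singleton) auto
  define h' where "h' = (\<lambda>(y, w). h (y, w k))"
  have h': "h' \<in> borel_measurable (?P \<Otimes>\<^sub>M ?Q)"
  proof -
    have "(\<lambda>(y, w). (y, w k)) \<in> measurable (?P \<Otimes>\<^sub>M ?Q) (?P \<Otimes>\<^sub>M D)"
      using pk by (auto intro!: measurable_Pair measurable_compose[OF measurable_snd pk] simp: split_beta')
    from measurable_compose[OF this h] show ?thesis by (simp add: h'_def split_beta')
  qed
  interpret QZ: prob_space "distr M ?Q ?Z" by (rule P.prob_space_distr[OF Zm])
  have inner: "(\<integral>\<^sup>+ w. h (y, w k) \<partial>distr M ?Q ?Z) = (\<integral>\<^sup>+s. h (y, s) \<partial>D)"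
    if y: "y \<in> space ?P" for y
  proof -
    have hy: "(\<lambda>s. h (y, s)) \<in> borel_measurable D" using measurable_compose_Pair1[OF y h] .
    have "(\<integral>\<^sup>+ w. h (y, w k) \<partial>distr M ?Q ?Z) = (\<integral>\<^sup>+ \<omega>. h (y, \<xi> k \<omega>) \<partial>M)"
      by (subst nn_integral_distr[OF Zm]) (use measurable_compose[OF pk hy] in simp_all)
    also have "\<dots> = (\<integral>\<^sup>+ s. h (y, s) \<partial>distr M D (\<xi> k))"
      by (rule nn_integral_distr[symmetric, OF xi_measurable]) (use hy in simp)
    finally show ?thesis using xi_distr by simp
  qed
  have "(\<integral>\<^sup>+\<omega>. h (?Y \<omega>, \<xi> k \<omega>) \<partial>M) = integral\<^sup>N (distr M (?P \<Otimes>\<^sub>M ?Q) (\<lambda>\<omega>. (?Y \<omega>, ?Z \<omega>))) h'"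
    by (subst nn_integral_distr[OF YZm]) (use h' in \<open>simp_all add: h'_def\<close>)
  also have "\<dots> = (\<integral>\<^sup>+ y. \<integral>\<^sup>+ w. h' (y, w) \<partial>distr M ?Q ?Z \<partial>distr M ?P ?Y)"
    unfolding prod[symmetric] by (rule QZ.nn_integral_fst[symmetric]) (use h' in simp)
  also have "\<dots> = (\<integral>\<^sup>+ y. \<integral>\<^sup>+ s. h (y, s) \<partial>D \<partial>distr M ?P ?Y)"
    by (rule nn_integral_cong) (simp add: h'_def inner)
  also have "\<dots> = (\<integral>\<^sup>+\<omega>. (\<integral>\<^sup>+s. h (?Y \<omega>, s) \<partial>D) \<partial>M)"
    by (rule nn_integral_distr[OF Ym]) (use Q.borel_measurable_nn_integral_fst[OF h] in simp)
  finally show ?thesis .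
qed

end

locale unbiased_oracle = prob_space D
  for D :: "'b measure" +
  fixes G :: "'a::euclidean_space \<Rightarrow> 'b \<Rightarrow> 'a" and g :: "'a \<Rightarrow> 'a" and \<sigma> :: real
  assumes G_measurable: "(\<lambda>(x, s). G x s) \<in> borel_measurable (borel \<Otimes>\<^sub>M D)"
    and unbiased: "\<forall>x. integrable D (G x) \<and> (\<integral>s. G x s \<partial>D) = g x"
    and variance_le: "\<forall>x. (\<integral>\<^sup>+ s. ennreal ((norm (G x s - g x))\<^sup>2) \<partial>D) \<le> ennreal (\<sigma>\<^sup>2)"
begin

lemma G_measurable_at: "G z \<in> borel_measurable D"
  using measurable_compose_Pair1[OF _ G_measurable, of z] by simp

lemma noise_moments:
  shows "integrable D (\<lambda>s. G z s - g z)" and "(\<integral>s. G z s - g z \<partial>D) = 0"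
    and "integrable D (\<lambda>s. (norm (G z s - g z))\<^sup>2)"
    and "(\<integral>s. (norm (G z s - g z))\<^sup>2 \<partial>D) \<le> \<sigma>\<^sup>2"
proof -
  show "integrable D (\<lambda>s. G z s - g z)" and "(\<integral>s. G z s - g z \<partial>D) = 0"
    using unbiased by (auto simp: prob_space)
  have m: "(\<lambda>s. (norm (G z s - g z))\<^sup>2) \<in> borel_measurable D"
    using G_measurable_at by measurable
  have fin: "(\<integral>\<^sup>+ s. ennreal ((norm (G z s - g z))\<^sup>2) \<partial>D) \<le> ennreal (\<sigma>\<^sup>2)"
    using variance_le by simp
  show i: "integrable D (\<lambda>s. (norm (G z s - g z))\<^sup>2)"
    unfolding integrable_iff_bounded using m fin by (auto simp: top.not_eq_extremum le_less_trans)
  have "ennreal (\<integral>s. (norm (G z s - g z))\<^sup>2 \<partial>D) = (\<integral>\<^sup>+ s. ennreal ((norm (G z s - g z))\<^sup>2) \<partial>D)"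
    by (rule nn_integral_eq_integral[symmetric, OF i]) auto
  with fin have "ennreal (\<integral>s. (norm (G z s - g z))\<^sup>2 \<partial>D) \<le> ennreal (\<sigma>\<^sup>2)" by simp
  then show "(\<integral>s. (norm (G z s - g z))\<^sup>2 \<partial>D) \<le> \<sigma>\<^sup>2"
    by (auto simp: ennreal_le_iff2 intro: order_trans[of _ 0])
qed

text \<open>The cross terms have mean zero, and the weighted Cauchy--Schwarz inequality
controls the square of the combined noise.\<close>

lemma noisy_second_moment_le:
  "(\<integral>\<^sup>+s. ennreal ((norm (a + t1 *\<^sub>R (G z1 s - g z1) + t2 *\<^sub>R (G z2 s - g z2)))\<^sup>2) \<partial>D)
     \<le> ennreal ((norm a)\<^sup>2 + (\<bar>t1\<bar> + \<bar>t2\<bar>)\<^sup>2 * \<sigma>\<^sup>2)"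
proof -
  define n where "n z s = G z s - g z" for z s
  note nm = noise_moments[of z1, folded n_def] noise_moments[of z2, folded n_def]
  define T where "T = \<bar>t1\<bar> + \<bar>t2\<bar>"
  define \<phi> where "\<phi> s = (norm a)\<^sup>2 + 2 * (t1 * (a \<bullet> n z1 s) + t2 * (a \<bullet> n z2 s))
        + T * (\<bar>t1\<bar> * (norm (n z1 s))\<^sup>2 + \<bar>t2\<bar> * (norm (n z2 s))\<^sup>2)" for s
  have pw: "(norm (a + t1 *\<^sub>R n z1 s + t2 *\<^sub>R n z2 s))\<^sup>2 \<le> \<phi> s" for s
  proof -
    let ?N = "t1 *\<^sub>R n z1 s + t2 *\<^sub>R n z2 s"
    have e: "(norm (a + ?N))\<^sup>2 = (norm a)\<^sup>2 + 2 * (a \<bullet> ?N) + (norm ?N)\<^sup>2"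
      by (simp add: dot_square_norm[symmetric] inner_add_left inner_add_right inner_commute add.assoc)
    have "norm ?N \<le> \<bar>t1\<bar> * norm (n z1 s) + \<bar>t2\<bar> * norm (n z2 s)"
      by (rule order_trans[OF norm_triangle_ineq]) simp
    then have "(norm ?N)\<^sup>2 \<le> (\<bar>t1\<bar> * norm (n z1 s) + \<bar>t2\<bar> * norm (n z2 s))\<^sup>2"
      by (simp add: power_mono)
    also have "\<dots> \<le> T * (\<bar>t1\<bar> * (norm (n z1 s))\<^sup>2 + \<bar>t2\<bar> * (norm (n z2 s))\<^sup>2)"
      unfolding T_def by (rule weighted_square_le) auto
    finally show ?thesis using e by (simp add: \<phi>_def inner_add_right add.assoc)
  qed
  have \<phi>_int: "integrable D \<phi>"
    unfolding \<phi>_def using nm by auto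
  have "(\<integral>s. \<phi> s \<partial>D) = (norm a)\<^sup>2
        + T * (\<bar>t1\<bar> * (\<integral>s. (norm (n z1 s))\<^sup>2 \<partial>D) + \<bar>t2\<bar> * (\<integral>s. (norm (n z2 s))\<^sup>2 \<partial>D))"
    unfolding \<phi>_def using nm by (simp add: prob_space)
  also have "\<dots> \<le> (norm a)\<^sup>2 + T * (\<bar>t1\<bar> * \<sigma>\<^sup>2 + \<bar>t2\<bar> * \<sigma>\<^sup>2)"
    using nm by (intro add_left_mono mult_left_mono add_mono) (auto simp: T_def)
  also have "\<dots> = (norm a)\<^sup>2 + T\<^sup>2 * \<sigma>\<^sup>2" by (simp add: T_def power2_eq_square algebra_simps)
  finally have \<phi>_le: "(\<integral>s. \<phi> s \<partial>D) \<le> (norm a)\<^sup>2 + T\<^sup>2 * \<sigma>\<^sup>2" .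
  have "(\<integral>\<^sup>+s. ennreal ((norm (a + t1 *\<^sub>R n z1 s + t2 *\<^sub>R n z2 s))\<^sup>2) \<partial>D) \<le> (\<integral>\<^sup>+s. ennreal (\<phi> s) \<partial>D)"
    by (rule nn_integral_mono) (use pw in \<open>simp add: ennreal_leI\<close>)
  also have "\<dots> = ennreal (\<integral>s. \<phi> s \<partial>D)"
    by (rule nn_integral_eq_integral[OF \<phi>_int]) (use pw in \<open>auto intro!: AE_I2 order_trans[OF zero_le_power2]\<close>)
  also have "\<dots> \<le> ennreal ((norm a)\<^sup>2 + T\<^sup>2 * \<sigma>\<^sup>2)" using \<phi>_le by (rule ennreal_leI)
  finally show ?thesis by (simp add: n_def T_def)
qed

end

section \<open>The iteration as a function of the sample path\<close>

definition sfom_step :: "('a::real_normed_vector \<Rightarrow> 'b \<Rightarrow> 'a) \<Rightarrow> (nat \<Rightarrow> real) \<Rightarrow>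
   (nat \<Rightarrow> nat \<Rightarrow> real) \<Rightarrow> (nat \<Rightarrow> nat \<Rightarrow> real) \<Rightarrow> nat \<Rightarrow> 'a \<times> 'a \<times> 'a \<Rightarrow> 'b \<Rightarrow> 'a \<times> 'a \<times> 'a" where
  "sfom_step G \<eta> \<gamma> \<theta> k st b =
    (let x = fst st; xp = fst (snd st); mp = snd (snd st);
         z = (\<lambda>t. x + ((1 - gam_prev \<gamma> k t) / gam_prev \<gamma> k t) *\<^sub>R (x - xp));
         m = (1 - (\<Sum>t=1..2. the_prev 2 \<theta> k t)) *\<^sub>R mp
             + (\<Sum>t=1..2. the_prev 2 \<theta> k t *\<^sub>R G (z t) b)
     in (x - (\<eta> k / norm m) *\<^sub>R m, x, m))"

lemma sfom_state_Suc_step: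
  "sfom_state G \<xi> \<eta> 2 \<gamma> \<theta> x0 (Suc k) \<omega> = sfom_step G \<eta> \<gamma> \<theta> k (sfom_state G \<xi> \<eta> 2 \<gamma> \<theta> x0 k \<omega>) (\<xi> k \<omega>)"
  by (simp add: sfom_step_def split_beta Let_def)

lemma sfom_state_eq_path:
  "sfom_state G \<xi> \<eta> 2 \<gamma> \<theta> x0 k \<omega> = sfom_state G (\<lambda>i w. w i) \<eta> 2 \<gamma> \<theta> x0 k (\<lambda>i. \<xi> i \<omega>)"
  by (induction k) (auto simp: sfom_state_Suc_step simp del: sfom_state.simps(2))

lemma sfom_state_path_prefix_cong:
  "(\<forall>i<k. w i = w' i) \<Longrightarrow>
    sfom_state G (\<lambda>i w. w i) \<eta> 2 \<gamma> \<theta> x0 k w = sfom_state G (\<lambda>i w. w i) \<eta> 2 \<gamma> \<theta> x0 k w'"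
  by (induction k) (auto simp: sfom_state_Suc_step simp del: sfom_state.simps(2))

lemma borel_measurable_fst_comp[measurable (raw)]:
  fixes f :: "'c \<Rightarrow> ('a::topological_space \<times> 'b::topological_space)"
  shows "f \<in> borel_measurable M \<Longrightarrow> (\<lambda>x. fst (f x)) \<in> borel_measurable M"
  by (rule borel_measurable_continuous_on[OF continuous_on_fst[OF continuous_on_id]])

lemma borel_measurable_snd_comp[measurable (raw)]:
  fixes f :: "'c \<Rightarrow> ('a::topological_space \<times> 'b::topological_space)"
  shows "f \<in> borel_measurable M \<Longrightarrow> (\<lambda>x. snd (f x)) \<in> borel_measurable M"
  by (rule borel_measurable_continuous_on[OF continuous_on_snd[OF continuous_on_id]])

context unbiased_oracle
begin

lemma G_measurable_comp[measurable (raw)]: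
  assumes "z \<in> borel_measurable N" "b \<in> measurable N D"
  shows "(\<lambda>x. G (z x) (b x)) \<in> borel_measurable N"
proof -
  have "(\<lambda>x. (z x, b x)) \<in> measurable N (borel \<Otimes>\<^sub>M D)" using assms by measurable
  from measurable_compose[OF this G_measurable] show ?thesis by simp
qed

lemma sfom_step_measurable:
  "(\<lambda>p. sfom_step G \<eta> \<gamma> \<theta> k (fst p) (snd p)) \<in> borel_measurable (borel \<Otimes>\<^sub>M D)"
proof -
  let ?x = "\<lambda>p::('a \<times> 'a \<times> 'a) \<times> 'b. fst (fst p)"
  let ?xp = "\<lambda>p::('a \<times> 'a \<times> 'a) \<times> 'b. fst (snd (fst p))"
  let ?mp = "\<lambda>p::('a \<times> 'a \<times> 'a) \<times> 'b. snd (snd (fst p))"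
  have mx: "?x \<in> borel_measurable (borel \<Otimes>\<^sub>M D)" "?xp \<in> borel_measurable (borel \<Otimes>\<^sub>M D)"
    "?mp \<in> borel_measurable (borel \<Otimes>\<^sub>M D)"
    by (intro borel_measurable_fst_comp borel_measurable_snd_comp measurable_fst)+
  define z where "z t p = ?x p + ((1 - gam_prev \<gamma> k t) / gam_prev \<gamma> k t) *\<^sub>R (?x p - ?xp p)" for t p
  define m where "m p = (1 - (\<Sum>t=1..2. the_prev 2 \<theta> k t)) *\<^sub>R ?mp p
             + (\<Sum>t=1..2. the_prev 2 \<theta> k t *\<^sub>R G (z t p) (snd p))" for p
  have mm: "m \<in> borel_measurable (borel \<Otimes>\<^sub>M D)"
    unfolding m_def z_def using mx by measurable
  have "(\<lambda>p. sfom_step G \<eta> \<gamma> \<theta> k (fst p) (snd p)) = (\<lambda>p. (?x p - (\<eta> k / norm (m p)) *\<^sub>R m p, ?x p, m p))"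
    by (simp add: sfom_step_def Let_def m_def z_def fun_eq_iff)
  then show ?thesis using mx mm by simp
qed

lemma sfom_state_path_measurable:
  "{..<k} \<subseteq> I \<Longrightarrow> sfom_state G (\<lambda>i w. w i) \<eta> 2 \<gamma> \<theta> x0 k \<in> borel_measurable (PiM I (\<lambda>_. D))"
proof (induction k)
  case 0
  then show ?case by simp
next
  case (Suc k)
  then have IH: "sfom_state G (\<lambda>i w. w i) \<eta> 2 \<gamma> \<theta> x0 k \<in> borel_measurable (PiM I (\<lambda>_. D))"
    by (meson lessThan_subset_iff order_trans le_SucI order_refl)
  have "k \<in> I" using Suc by auto
  with IH have "(\<lambda>w. (sfom_state G (\<lambda>i w. w i) \<eta> 2 \<gamma> \<theta> x0 k w, w k))
      \<in> measurable (PiM I (\<lambda>_. D)) (borel \<Otimes>\<^sub>M D)"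
    by measurable
  from measurable_compose[OF this sfom_step_measurable]
  show ?case by (simp add: sfom_state_Suc_step del: sfom_state.simps(2))
qed

end

section \<open>Scalar estimates and the parameter schedule\<close>

lemma powr_three_fifths_increment_le:
  fixes r :: real
  assumes r: "r \<ge> 2"
  shows "r powr (3/5) - (r - 1) powr (3/5) \<le> 3/5"
proof -
  have "\<exists>z. r - 1 < z \<and> z < r \<and>
      r powr (3/5) - (r - 1) powr (3/5) = (r - (r - 1)) * (3/5 * z powr (3/5 - 1))"
    by (rule MVT2) (simp, rule has_real_derivative_powr, insert r, auto)
  then obtain z where z: "r - 1 < z" "z < r"
    and eq: "r powr (3/5) - (r - 1) powr (3/5) = 3/5 * z powr (3/5 - 1)"
    by auto
  have "z powr (3/5 - 1) = inverse (z powr (2/5))" using z r by (simp add: powr_minus[symmetric])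
  moreover have "z powr (2/5) \<ge> 1" using z r by (intro ge_one_powr_ge_zero) auto
  ultimately have "z powr (3/5 - 1) \<le> 1" by (simp add: inverse_le_1_iff)
  then show ?thesis using eq by simp
qed

text \<open>The scalar identities and estimates behind the choice of parameters, in terms
of \<open>s = (k + 3)\<^sup>3\<^sup>/\<^sup>5\<close>: the momentum keeps the fraction \<open>1 - (3 s - 1) / (2 s\<^sup>2)\<close> of
the previous direction, the extrapolation points sit at \<open>s - 1\<close> and \<open>2 s - 1\<close> step
lengths ahead, and the new gradients get the weights \<open>(2 s - 1) / s\<^sup>2\<close> and
\<open>(1 - s) / (2 s\<^sup>2)\<close>.\<close>

lemma momentum_factor_bounds:
  fixes s :: real
  assumes s: "s \<ge> 1"
  shows "0 \<le> 1 - (3 * s - 1) / (2 * s^2)" and "1 - (3 * s - 1) / (2 * s^2) \<le> 1 - 1/s"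
    and "(1 + 1/s) * (1 - (3 * s - 1) / (2 * s^2))^2 \<le> 1 - 1/s"
proof -
  have sp: "s > 0" using s by simp
  have e: "1 - (3 * s - 1) / (2 * s^2) = (2 * s - 1) * (s - 1) / (2 * s^2)"
    using sp by (simp add: field_simps power2_eq_square)
  show a: "0 \<le> 1 - (3 * s - 1) / (2 * s^2)" unfolding e using s by simp
  show b: "1 - (3 * s - 1) / (2 * s^2) \<le> 1 - 1/s"
    using sp s by (simp add: field_simps power2_eq_square)
  have "(1 + 1/s) * (1 - (3 * s - 1) / (2 * s^2))^2 \<le> (1 + 1/s) * (1 - 1/s)^2"
    using a b sp by (intro mult_left_mono power_mono) auto
  also have "\<dots> = (1 - 1/s) * (1 - 1/s^2)" using sp by (simp add: field_simps power2_eq_square)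
  also have "\<dots> \<le> 1 - 1/s" using s sp by (intro mult_left_le) (auto simp: field_simps)
  finally show "(1 + 1/s) * (1 - (3 * s - 1) / (2 * s^2))^2 \<le> 1 - 1/s" .
qed

lemma weight_abs_sum_sq_le:
  fixes s :: real
  assumes s: "s \<ge> 1"
  shows "(\<bar>(2 * s - 1) / s^2\<bar> + \<bar>(1 - s) / (2 * s^2)\<bar>)^2 \<le> 25 / (4 * s^2)"
proof -
  have sp: "s > 0" using s by simp
  have "\<bar>(2 * s - 1) / s^2\<bar> + \<bar>(1 - s) / (2 * s^2)\<bar> = (5 * s - 3) / (2 * s^2)"
    using s sp by (simp add: abs_div_pos field_simps)
  also have "\<dots> \<le> 5 / (2 * s)" using sp s by (simp add: field_simps power2_eq_square)
  finally have "(\<bar>(2 * s - 1) / s^2\<bar> + \<bar>(1 - s) / (2 * s^2)\<bar>)^2 \<le> (5 / (2 * s))^2"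
    by (intro power_mono) auto
  also have "\<dots> = 25 / (4 * s^2)" by (simp add: power2_eq_square)
  finally show ?thesis .
qed

lemma extrapolation_weights_cancel:
  fixes s :: real
  assumes s: "s \<ge> 1"
  defines "c0 \<equiv> 1 - (3 * s - 1) / (2 * s^2)" and "c1 \<equiv> (2 * s - 1) / s^2"
    and "c2 \<equiv> (1 - s) / (2 * s^2)" and "a1 \<equiv> s - 1" and "a2 \<equiv> 2 * s - 1"
  shows "- c0 + c1 * a1 + c2 * a2 = 0" and "c0 + c1 * a1^2 + c2 * a2^2 = 0"
    and "(\<bar>c0\<bar> + \<bar>c1\<bar> * \<bar>a1\<bar>^3 + \<bar>c2\<bar> * \<bar>a2\<bar>^3) / 6 \<le> s^2"
proof -
  have sp: "s > 0" using s by simp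
  show "- c0 + c1 * a1 + c2 * a2 = 0" and "c0 + c1 * a1^2 + c2 * a2^2 = 0"
    unfolding c0_def c1_def c2_def a1_def a2_def using sp by (simp_all add: field_simps power2_eq_square)
  have c0: "c0 = (2 * s - 1) * (s - 1) / (2 * s^2)"
    unfolding c0_def using sp s by (simp add: field_simps power2_eq_square)
  have abs_c0: "\<bar>c0\<bar> = (2 * s - 1) * (s - 1) / (2 * s^2)"
    unfolding c0 using s by (intro abs_of_nonneg) auto
  have "\<bar>c0\<bar> + \<bar>c1\<bar> * \<bar>a1\<bar>^3 + \<bar>c2\<bar> * \<bar>a2\<bar>^3
      = (2 * s - 1) * (s - 1) / (2 * s^2) * (1 + 2 * (s - 1)^2 + (2 * s - 1)^2)"
    unfolding abs_c0 c1_def c2_def a1_def a2_def using sp s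
    by (simp add: abs_div_pos field_simps power2_eq_square power3_eq_cube)
  also have "\<dots> \<le> 1 * (6 * s^2)"
  proof (rule mult_mono)
    show "(2 * s - 1) * (s - 1) / (2 * s^2) \<le> 1" using sp s by (simp add: field_simps power2_eq_square)
    show "1 + 2 * (s - 1)^2 + (2 * s - 1)^2 \<le> 6 * s^2" using s by (simp add: field_simps power2_eq_square)
  qed auto
  finally show "(\<bar>c0\<bar> + \<bar>c1\<bar> * \<bar>a1\<bar>^3 + \<bar>c2\<bar> * \<bar>a2\<bar>^3) / 6 \<le> s^2" by simp
qed

lemma cubic_step_sq_le:
  fixes r L :: real
  assumes r: "r \<ge> 1"
  defines "s \<equiv> r powr (3/5)" and "e \<equiv> 1 / r powr (7/10)"
  shows "(1 + s) * (L * e^3 * s^2)^2 \<le> 2 * L^2 / s^2"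
proof -
  have rp: "r > 0" using r by simp
  have s1: "s \<ge> 1" unfolding s_def using r by (intro ge_one_powr_ge_zero) auto
  have key: "s^7 * e^6 = 1"
  proof -
    have "s^7 = r powr (21/5)" unfolding s_def using rp by (simp add: powr_power)
    moreover have "e^6 = 1 / r powr (21/5)" unfolding e_def using rp by (simp add: powr_power power_divide)
    ultimately show ?thesis using rp by simp
  qed
  have "(1 + s) * (L * e^3 * s^2)^2 = (1 + s) * L^2 * (s^4 * e^6)"
    by (simp add: power_mult_distrib power_mult[symmetric] mult.commute)
  also have "\<dots> \<le> (2 * s) * L^2 * (s^4 * e^6)"
    using s1 by (intro mult_right_mono) auto
  also have "\<dots> = 2 * L^2 * (s^7 * e^6) / s^2"
    using s1 by (simp add: field_simps power2_eq_square eval_nat_numeral)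
  also have "\<dots> = 2 * L^2 / s^2" using key by simp
  finally show ?thesis .
qed

text \<open>Induction step for \<open>E\<parallel>e\<^sub>k\<parallel>\<^sup>2 \<le> C / (k + 2)\<^sup>3\<^sup>/\<^sup>5\<close>, with \<open>s' = (k + 2)\<^sup>3\<^sup>/\<^sup>5\<close> and
\<open>s = (k + 3)\<^sup>3\<^sup>/\<^sup>5\<close>.\<close>

lemma err_bound_induction_step:
  fixes s s' \<alpha> B C :: real
  assumes s: "s' \<ge> 1" "s' \<le> s" "s - s' \<le> 3/5" and \<alpha>: "0 \<le> \<alpha>" "\<alpha> \<le> 1 - 1/s"
    and B: "B \<ge> 0" "5/2 * B \<le> C"
  shows "\<alpha> * (C / s') + B / s^2 \<le> C / s"
proof -
  have sp: "s > 0" "s' > 0" using s by auto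
  have C: "C \<ge> 0" using B by linarith
  have "\<alpha> * (C / s') \<le> (1 - 1/s) * (C / s')" using \<alpha> C sp by (intro mult_right_mono) auto
  also have "\<dots> = C * ((s - 1) / (s * s'))" using sp by (simp add: field_simps)
  also have "\<dots> \<le> C * ((s' - 2/5) / (s * s'))"
    using s sp C by (intro mult_left_mono divide_right_mono) auto
  also have "\<dots> = C / s - (2/5) * C / (s * s')" using sp by (simp add: field_simps)
  finally have 1: "\<alpha> * (C / s') \<le> C / s - (2/5) * C / (s * s')" .
  have "B / s^2 \<le> B / (s * s')"
    using sp s B by (intro divide_left_mono mult_left_mono) (auto simp: power2_eq_square)
  also have "\<dots> \<le> (2/5) * C / (s * s')" using sp B by (intro divide_right_mono) auto
  finally show ?thesis using 1 by linarith
qed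

definition sfom_eta :: "nat \<Rightarrow> real" where
  "sfom_eta = (\<lambda>k. 1 / (real k + 3) powr (7/10))"

definition sfom_gamma :: "nat \<Rightarrow> nat \<Rightarrow> real" where
  "sfom_gamma = (\<lambda>k t. if t = 1 then 1 / (real k + 3) powr (3/5)
                        else 1 / (2 * (real k + 3) powr (3/5)))"

definition sfom_theta :: "nat \<Rightarrow> nat \<Rightarrow> real" where
  "sfom_theta = (\<lambda>k t. if t = 1 then (2 * (real k + 3) powr (3/5) - 1) / (real k + 3) powr (6/5)
                        else (1 - (real k + 3) powr (3/5)) / (2 * (real k + 3) powr (6/5)))"

definition gamma_prev :: "nat \<Rightarrow> nat \<Rightarrow> real" where
  "gamma_prev k t = gam_prev sfom_gamma k t"

definition theta_prev :: "nat \<Rightarrow> nat \<Rightarrow> real" where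
  "theta_prev k t = the_prev 2 sfom_theta k t"

definition theta_sum :: "nat \<Rightarrow> real" where
  "theta_sum k = theta_prev k 1 + theta_prev k 2"

definition extrap_point :: "nat \<Rightarrow> nat \<Rightarrow> 'a::real_normed_vector \<times> 'a \<times> 'a \<Rightarrow> 'a" where
  "extrap_point k t st = fst st + ((1 - gamma_prev k t) / gamma_prev k t) *\<^sub>R (fst st - fst (snd st))"

definition sched :: "nat \<Rightarrow> real" where
  "sched j = (real j + 3) powr (3/5)"

lemma sfom_step_schedule:
  "sfom_step G sfom_eta sfom_gamma sfom_theta k st b =
    (let m = (1 - theta_sum k) *\<^sub>R snd (snd st) + theta_prev k 1 *\<^sub>R G (extrap_point k 1 st) b
             + theta_prev k 2 *\<^sub>R G (extrap_point k 2 st) b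
     in (fst st - (sfom_eta k / norm m) *\<^sub>R m, fst st, m))"
proof -
  have "{1..2::nat} = {1, 2}" by auto
  then show ?thesis
    by (simp add: sfom_step_def Let_def theta_sum_def theta_prev_def extrap_point_def
        gamma_prev_def add.assoc)
qed

lemma sfom_eta_pos: "sfom_eta k > 0"
  by (simp add: sfom_eta_def)

lemma sfom_eta_antimono: "i \<le> j \<Longrightarrow> sfom_eta j \<le> sfom_eta i"
  unfolding sfom_eta_def by (intro divide_left_mono powr_mono2 mult_pos_pos) auto

lemma sfom_eta_div_le: "sfom_eta k / (real k + 2) powr (3/10) \<le> 1 / (real k + 2)"
proof -
  have "(real k + 2) powr (7/10) \<le> (real k + 3) powr (7/10)" by (intro powr_mono2) auto
  then have "sfom_eta k \<le> 1 / (real k + 2) powr (7/10)"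
    unfolding sfom_eta_def by (intro divide_left_mono) auto
  then have "sfom_eta k / (real k + 2) powr (3/10) \<le> 1 / (real k + 2) powr (7/10) / (real k + 2) powr (3/10)"
    by (intro divide_right_mono) auto
  also have "\<dots> = 1 / (real k + 2)"
    by (simp add: powr_add[symmetric])
  finally show ?thesis .
qed

lemma sfom_eta_sq_le: "(sfom_eta k)^2 \<le> 1 / (real k + 2)"
proof -
  have "(sfom_eta k)^2 = 1 / (real k + 3) powr (7/5)"
    unfolding sfom_eta_def by (simp add: power_divide powr_power)
  also have "\<dots> \<le> 1 / (real k + 3) powr 1"
    by (intro divide_left_mono powr_mono) auto
  also have "\<dots> \<le> 1 / (real k + 2)" by (simp add: frac_le)
  finally show ?thesis .
qed

lemma sched_ge_1: "sched j \<ge> 1"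
  unfolding sched_def by (intro ge_one_powr_ge_zero) auto

lemma schedule_Suc:
  "gamma_prev (Suc j) 1 = 1 / sched j" "gamma_prev (Suc j) 2 = 1 / (2 * sched j)"
  "theta_prev (Suc j) 1 = (2 * sched j - 1) / (sched j)^2"
  "theta_prev (Suc j) 2 = (1 - sched j) / (2 * (sched j)^2)"
  "theta_sum (Suc j) = (3 * sched j - 1) / (2 * (sched j)^2)"
  "(1 - gamma_prev (Suc j) 1) / gamma_prev (Suc j) 1 = sched j - 1"
  "(1 - gamma_prev (Suc j) 2) / gamma_prev (Suc j) 2 = 2 * sched j - 1"
proof -
  have s: "sched j > 0" using sched_ge_1[of j] by simp
  have sq: "(real j + 3) powr (6/5) = ((real j + 3) powr (3/5))^2"
    by (simp add: powr_power)
  show g1: "gamma_prev (Suc j) 1 = 1 / sched j" and g2: "gamma_prev (Suc j) 2 = 1 / (2 * sched j)"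
    by (simp_all add: gamma_prev_def gam_prev_def sfom_gamma_def sched_def)
  show t1: "theta_prev (Suc j) 1 = (2 * sched j - 1) / (sched j)^2"
    and t2: "theta_prev (Suc j) 2 = (1 - sched j) / (2 * (sched j)^2)"
    by (simp_all add: theta_prev_def the_prev_def sfom_theta_def sq sched_def)
  show "theta_sum (Suc j) = (3 * sched j - 1) / (2 * (sched j)^2)"
    unfolding theta_sum_def t1 t2 using s by (simp add: field_simps power2_eq_square)
  show "(1 - gamma_prev (Suc j) 1) / gamma_prev (Suc j) 1 = sched j - 1"
    and "(1 - gamma_prev (Suc j) 2) / gamma_prev (Suc j) 2 = 2 * sched j - 1"
    unfolding g1 g2 using s by (simp_all add: field_simps)
qed

lemma schedule_0: "gamma_prev 0 t = 1" "theta_prev 0 t = 1/2" "theta_sum 0 = 1"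
  by (simp_all add: gamma_prev_def gam_prev_def theta_prev_def the_prev_def theta_sum_def)

lemma one_plus_ln_Suc_le:
  fixes K :: real
  assumes K: "K \<ge> 5"
  shows "1 + ln (K + 1) \<le> 2 * ln K"
proof -
  have "exp 1 * (K + 1) \<le> 3 * (K + 1)" using exp_le K by (intro mult_right_mono) auto
  also have "\<dots> \<le> 5 * K" using K by simp
  also have "\<dots> \<le> K * K" using K by (intro mult_right_mono) auto
  finally have "ln (exp 1 * (K + 1)) \<le> ln (K * K)" using K by simp
  then show ?thesis using K by (simp add: ln_mult)
qed

lemma powr_seven_tenths_add2_le:
  fixes K :: real
  assumes K: "K \<ge> 5"
  shows "(K + 2) powr (7/10) \<le> 7/5 * K powr (7/10)"
proof -
  have "(K + 2) powr (7/10) \<le> (7/5 * K) powr (7/10)" using K by (intro powr_mono2) auto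
  also have "\<dots> = (7/5) powr (7/10) * K powr (7/10)" using K by (subst powr_mult) auto
  also have "(7/5::real) powr (7/10) \<le> (7/5) powr 1" by (intro powr_mono) auto
  finally show ?thesis using K by (simp add: mult_right_mono)
qed

lemma complexity_arithmetic:
  fixes Q \<epsilon> K :: real
  assumes Q: "Q \<ge> 2" and \<epsilon>: "0 < \<epsilon>" "\<epsilon> < 1" and K5: "K \<ge> 5"
    and K: "K \<ge> ((20 * (4 * Q) / (3 * \<epsilon>)) * ln (20 * (4 * Q) / (3 * \<epsilon>))) powr (10/3)"
  shows "Q * (1 + ln (K + 1)) * (K + 2) powr (7/10) / K \<le> \<epsilon>"
proof -
  define c where "c = 20 * (4 * Q) / (3 * \<epsilon>)"
  have c3: "c \<ge> 3"
  proof -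
    have "3 * (3 * \<epsilon>) \<le> 20 * (4 * Q)" using Q \<epsilon> by simp
    then show ?thesis unfolding c_def using \<epsilon> by (simp add: field_simps)
  qed
  have Kp: "K > 0" using K5 by simp
  have clc: "c * ln c \<ge> 0" using c3 by simp
  define y where "y = K powr (3/10)"
  have yp: "y > 0" unfolding y_def using Kp by simp
  have "y \<ge> ((c * ln c) powr (10/3)) powr (3/10)"
    unfolding y_def using K clc by (intro powr_mono2) (auto simp: c_def)
  then have yc: "y \<ge> c * ln c"
    using clc by (simp add: powr_powr)
  have "ln K / y = 10/3 * (ln y / y)"
    unfolding y_def using Kp by (simp add: ln_powr)
  also have "\<dots> \<le> 10/3 * (2 / c)"
    using ln_le_of_ge_mul_ln[OF c3 yc] yp by (intro mult_left_mono) (auto simp: field_simps)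
  also have "\<dots> = \<epsilon> / (4 * Q)" unfolding c_def using Q \<epsilon> by (simp add: field_simps)
  finally have lnK: "ln K / y \<le> \<epsilon> / (4 * Q)" .
  have Ky: "K powr (7/10) / K = 1 / y"
  proof -
    have "K = K powr (7/10) * K powr (3/10)" using Kp by (simp add: powr_add[symmetric])
    then show ?thesis unfolding y_def using Kp by (metis divide_divide_eq_right div_by_1 divide_self_if
        nonzero_mult_div_cancel_left powr_gt_zero less_irrefl)
  qed
  have "Q * (1 + ln (K + 1)) * (K + 2) powr (7/10) / K \<le> Q * (2 * ln K) * (7/5 * K powr (7/10)) / K"
    using one_plus_ln_Suc_le[OF K5] powr_seven_tenths_add2_le[OF K5] Q Kp K5
    by (intro divide_right_mono mult_mono mult_left_mono) auto
  also have "\<dots> = 14/5 * Q * (ln K * (K powr (7/10) / K))" by simp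
  also have "\<dots> = 14/5 * Q * (ln K / y)" by (simp add: Ky)
  also have "\<dots> \<le> 14/5 * Q * (\<epsilon> / (4 * Q))" using lnK Q by (intro mult_left_mono) auto
  also have "\<dots> \<le> \<epsilon>" using Q \<epsilon> by (simp add: field_simps)
  finally show ?thesis .
qed

section \<open>The error recursion\<close>

locale sfom_analysis = iid_sequence M D \<xi> + unbiased_oracle D G g \<sigma>
  for M :: "'w measure" and D :: "'b measure" and \<xi> :: "nat \<Rightarrow> 'w \<Rightarrow> 'b"
    and G :: "'a::euclidean_space \<Rightarrow> 'b \<Rightarrow> 'a" and g :: "'a \<Rightarrow> 'a" and \<sigma> :: real +
  fixes f :: "'a \<Rightarrow> real" and x0 :: 'a and flow L1 L3 :: real
    and D2 :: "'a \<Rightarrow> 'a \<Rightarrow> 'a \<Rightarrow> real" and D3 :: "'a \<Rightarrow> 'a \<Rightarrow> 'a \<Rightarrow> 'a \<Rightarrow> real"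
  assumes f_lower: "\<forall>x. f x \<ge> flow"
    and f_grad: "\<forall>x. (f has_derivative (\<lambda>h. g x \<bullet> h)) (at x)"
    and L1_nonneg: "L1 \<ge> 0" and g_lipschitz: "\<forall>x y. norm (g y - g x) \<le> L1 * norm (y - x)"
    and L3_nonneg: "L3 \<ge> 0"
    and g_deriv: "\<forall>x h1. ((\<lambda>y. g y \<bullet> h1) has_derivative (\<lambda>h2. D2 x h1 h2)) (at x)"
    and D2_deriv: "\<forall>x h1 h2. ((\<lambda>y. D2 y h1 h2) has_derivative (\<lambda>h3. D3 x h1 h2 h3)) (at x)"
    and D3_lipschitz: "\<forall>x y h1 h2 h3. norm h1 \<le> 1 \<longrightarrow> norm h2 \<le> 1 \<longrightarrow> norm h3 \<le> 1 \<longrightarrow>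
          D3 y h1 h2 h3 - D3 x h1 h2 h3 \<le> L3 * norm (y - x)"
begin

definition state :: "nat \<Rightarrow> 'w \<Rightarrow> 'a \<times> 'a \<times> 'a" where "state k \<omega> = sfom_state G \<xi> sfom_eta 2 sfom_gamma sfom_theta x0 k \<omega>"
definition iter :: "nat \<Rightarrow> 'w \<Rightarrow> 'a" where "iter k \<omega> = fst (state k \<omega>)"
definition mom :: "nat \<Rightarrow> 'w \<Rightarrow> 'a" where "mom k \<omega> = snd (snd (state (Suc k) \<omega>))"
definition err :: "nat \<Rightarrow> 'w \<Rightarrow> 'a" where "err k \<omega> = mom k \<omega> - g (iter k \<omega>)"

text \<open>The part of \<open>e\<^sub>k\<close> that does not depend on the fresh sample \<open>\<xi>\<^sub>k\<close>.\<close>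

definition drift :: "nat \<Rightarrow> 'a \<times> 'a \<times> 'a \<Rightarrow> 'a" where
  "drift k st = (1 - theta_sum k) *\<^sub>R (snd (snd st) - g (fst (snd st)))
     + (1 - theta_sum k) *\<^sub>R (g (fst (snd st)) - g (fst st))
     + theta_prev k 1 *\<^sub>R (g (extrap_point k 1 st) - g (fst st))
     + theta_prev k 2 *\<^sub>R (g (extrap_point k 2 st) - g (fst st))"

definition err_msq :: "nat \<Rightarrow> ennreal" where "err_msq k = (\<integral>\<^sup>+\<omega>. ennreal ((norm (err k \<omega>))\<^sup>2) \<partial>M)"

definition C_err :: real where "C_err = 6 * L3^2 + 19 * \<sigma>^2"

lemma state_Suc: "state (Suc k) \<omega> = sfom_step G sfom_eta sfom_gamma sfom_theta k (state k \<omega>) (\<xi> k \<omega>)"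
  unfolding state_def by (rule sfom_state_Suc_step)

lemma iter_0: "iter 0 \<omega> = x0"
  by (simp add: iter_def state_def)

lemma iter_Suc: "iter (Suc k) \<omega> = iter k \<omega> - (sfom_eta k / norm (mom k \<omega>)) *\<^sub>R mom k \<omega>"
  unfolding iter_def mom_def state_Suc[of k] sfom_step_schedule by (simp add: Let_def)

lemma state_Suc_prev: "fst (snd (state (Suc k) \<omega>)) = iter k \<omega>" "snd (snd (state (Suc k) \<omega>)) = mom k \<omega>"
  unfolding iter_def mom_def state_Suc[of k] sfom_step_schedule by (simp_all add: Let_def)

lemma mom_eq:
  "mom k \<omega> = (1 - theta_sum k) *\<^sub>R snd (snd (state k \<omega>))
    + theta_prev k 1 *\<^sub>R G (extrap_point k 1 (state k \<omega>)) (\<xi> k \<omega>)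
    + theta_prev k 2 *\<^sub>R G (extrap_point k 2 (state k \<omega>)) (\<xi> k \<omega>)"
  unfolding mom_def state_Suc sfom_step_schedule by (simp add: Let_def)

lemma err_eq_drift_plus_noise:
  "err k \<omega> = drift k (state k \<omega>)
    + theta_prev k 1 *\<^sub>R (G (extrap_point k 1 (state k \<omega>)) (\<xi> k \<omega>) - g (extrap_point k 1 (state k \<omega>)))
    + theta_prev k 2 *\<^sub>R (G (extrap_point k 2 (state k \<omega>)) (\<xi> k \<omega>) - g (extrap_point k 2 (state k \<omega>)))"
  unfolding err_def mom_eq drift_def iter_def theta_sum_def by (simp add: algebra_simps)

lemma iter_step_norm_le: "norm (iter (Suc k) \<omega> - iter k \<omega>) \<le> sfom_eta k"
  unfolding iter_Suc using sfom_eta_pos[of k] by (cases "mom k \<omega> = 0") auto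

lemma g_measurable[measurable]: "g \<in> borel_measurable borel"
proof (rule borel_measurable_continuous_onI, rule lipschitz_on_continuous_on)
  show "L1-lipschitz_on UNIV g"
    by (rule lipschitz_onI) (use g_lipschitz L1_nonneg in \<open>auto simp: dist_norm\<close>)
qed

abbreviation state_of_path :: "nat \<Rightarrow> (nat \<Rightarrow> 'b) \<Rightarrow> 'a \<times> 'a \<times> 'a" where
  "state_of_path k \<equiv> sfom_state G (\<lambda>i w. w i) sfom_eta 2 sfom_gamma sfom_theta x0 k"

lemma state_eq_prefix: "state k \<omega> = state_of_path k (restrict (\<lambda>i. \<xi> i \<omega>) {..<k})"
  unfolding state_def sfom_state_eq_path[of G \<xi>] by (rule sfom_state_path_prefix_cong) auto

lemma state_measurable[measurable]: "state k \<in> borel_measurable M"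
proof -
  have "(\<lambda>\<omega>. restrict (\<lambda>i. \<xi> i \<omega>) {..<k}) \<in> measurable M (PiM {..<k} (\<lambda>_. D))"
    by measurable
  from measurable_compose[OF this sfom_state_path_measurable[of k "{..<k}"]] show ?thesis
    by (simp add: state_eq_prefix[abs_def])
qed

lemma extrap_point_measurable[measurable]: "extrap_point k t \<in> borel_measurable borel"
  by (rule borel_measurable_continuous_onI)
     (auto simp: extrap_point_def[abs_def] intro!: continuous_intros)

lemma drift_measurable[measurable]: "drift k \<in> borel_measurable borel"
  unfolding drift_def[abs_def] by measurable

lemma iter_measurable[measurable]: "iter k \<in> borel_measurable M"
  unfolding iter_def[abs_def] by measurable

lemma mom_measurable[measurable]: "mom k \<in> borel_measurable M"
  unfolding mom_def[abs_def] by measurable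

lemma err_measurable[measurable]: "err k \<in> borel_measurable M"
  unfolding err_def[abs_def] by measurable

lemma err_msq_le_drift:
  "err_msq k \<le> (\<integral>\<^sup>+\<omega>. ennreal ((norm (drift k (state k \<omega>)))\<^sup>2) \<partial>M)
      + ennreal ((\<bar>theta_prev k 1\<bar> + \<bar>theta_prev k 2\<bar>)\<^sup>2 * \<sigma>\<^sup>2)"
proof -
  define h where "h = (\<lambda>(y, b). ennreal ((norm (drift k (state_of_path k y)
    + theta_prev k 1 *\<^sub>R (G (extrap_point k 1 (state_of_path k y)) b - g (extrap_point k 1 (state_of_path k y)))
    + theta_prev k 2 *\<^sub>R (G (extrap_point k 2 (state_of_path k y)) b - g (extrap_point k 2 (state_of_path k y)))))\<^sup>2))"
  have "(\<lambda>p. state_of_path k (fst p)) \<in> borel_measurable (PiM {..<k} (\<lambda>_. D) \<Otimes>\<^sub>M D)"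
    using sfom_state_path_measurable[of k "{..<k}"] by measurable
  then have hm: "h \<in> borel_measurable (PiM {..<k} (\<lambda>_. D) \<Otimes>\<^sub>M D)"
    unfolding h_def split_beta' by measurable
  have "err_msq k = (\<integral>\<^sup>+\<omega>. h (restrict (\<lambda>i. \<xi> i \<omega>) {..<k}, \<xi> k \<omega>) \<partial>M)"
    by (simp add: err_msq_def h_def err_eq_drift_plus_noise state_eq_prefix)
  also have "\<dots> = (\<integral>\<^sup>+\<omega>. (\<integral>\<^sup>+s. h (restrict (\<lambda>i. \<xi> i \<omega>) {..<k}, s) \<partial>D) \<partial>M)"
    by (rule nn_integral_indep_current[OF hm])
  also have "\<dots> \<le> (\<integral>\<^sup>+\<omega>. ennreal ((norm (drift k (state k \<omega>)))\<^sup>2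
      + (\<bar>theta_prev k 1\<bar> + \<bar>theta_prev k 2\<bar>)\<^sup>2 * \<sigma>\<^sup>2) \<partial>M)"
    by (rule nn_integral_mono)
       (unfold h_def state_eq_prefix[symmetric] split_beta' fst_conv snd_conv,
        rule noisy_second_moment_le)
  also have "\<dots> = (\<integral>\<^sup>+\<omega>. ennreal ((norm (drift k (state k \<omega>)))\<^sup>2) \<partial>M)
      + ennreal ((\<bar>theta_prev k 1\<bar> + \<bar>theta_prev k 2\<bar>)\<^sup>2 * \<sigma>\<^sup>2)"
    by (subst ennreal_plus) (auto simp: nn_integral_add P.emeasure_space_1)
  finally show ?thesis .
qed

lemma drift_0: "drift 0 (state 0 \<omega>) = 0"
  by (simp add: drift_def state_def schedule_0 extrap_point_def)

text \<open>With \<open>x = x\<^sup>j\<^sup>+\<^sup>1\<close> and \<open>d = x\<^sup>j\<^sup>+\<^sup>1 - x\<^sup>j\<close>, the drift is \<open>c\<^sub>0 e\<^sub>j\<close> plus a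
combination of \<open>g(x - d)\<close>, \<open>g(x + (s - 1) d)\<close>, \<open>g(x + (2 s - 1) d)\<close> minus \<open>g(x)\<close> to which
the lemma \<open>third_order_difference_bound\<close> applies.\<close>

lemma drift_norm_le:
  "norm (drift (Suc j) (state (Suc j) \<omega>))
     \<le> (1 - theta_sum (Suc j)) * norm (err j \<omega>) + L3 * (sfom_eta j)^3 * (sched j)^2"
proof -
  define s where "s = sched j"
  have s1: "s \<ge> 1" unfolding s_def by (rule sched_ge_1)
  define x where "x = iter (Suc j) \<omega>"
  define d where "d = iter (Suc j) \<omega> - iter j \<omega>"
  define c0 where "c0 = 1 - (3 * s - 1) / (2 * s^2)"
  define c1 where "c1 = (2 * s - 1) / s^2"
  define c2 where "c2 = (1 - s) / (2 * s^2)"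
  let ?E = "c0 *\<^sub>R (g (x - d) - g x) + c1 *\<^sub>R (g (x + (s - 1) *\<^sub>R d) - g x)
    + c2 *\<^sub>R (g (x + (2 * s - 1) *\<^sub>R d) - g x)"
  have xd: "x - d = iter j \<omega>" by (simp add: x_def d_def)
  have z1: "extrap_point (Suc j) 1 (state (Suc j) \<omega>) = x + (s - 1) *\<^sub>R d"
    unfolding extrap_point_def schedule_Suc(6) s_def x_def d_def iter_def[symmetric] state_Suc_prev ..
  have z2: "extrap_point (Suc j) 2 (state (Suc j) \<omega>) = x + (2 * s - 1) *\<^sub>R d"
    unfolding extrap_point_def schedule_Suc(7) s_def x_def d_def iter_def[symmetric] state_Suc_prev ..
  have drift_eq: "drift (Suc j) (state (Suc j) \<omega>) = c0 *\<^sub>R err j \<omega> + ?E"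
    unfolding drift_def z1 z2 xd unfolding schedule_Suc s_def[symmetric] c0_def[symmetric]
      c1_def[symmetric] c2_def[symmetric]
    by (simp add: err_def state_Suc_prev x_def iter_def[symmetric] algebra_simps)
  have "norm ?E \<le> L3 * norm d ^ 3 * ((\<bar>c0\<bar> + \<bar>c1\<bar> * \<bar>s - 1\<bar>^3 + \<bar>c2\<bar> * \<bar>2 * s - 1\<bar>^3) / 6)"
    using third_order_difference_bound[OF g_deriv D2_deriv D3_lipschitz L3_nonneg,
        of c0 c1 "s - 1" c2 "2 * s - 1" x d]
      extrapolation_weights_cancel[OF s1]
    by (simp add: c0_def c1_def c2_def)
  also have "\<dots> \<le> L3 * (sfom_eta j)^3 * s^2"
  proof (rule mult_mono)
    show "L3 * norm d ^ 3 \<le> L3 * (sfom_eta j)^3"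
      using L3_nonneg iter_step_norm_le[of j \<omega>] by (intro mult_left_mono power_mono) (auto simp: d_def)
    show "(\<bar>c0\<bar> + \<bar>c1\<bar> * \<bar>s - 1\<bar>^3 + \<bar>c2\<bar> * \<bar>2 * s - 1\<bar>^3) / 6 \<le> s^2"
      using extrapolation_weights_cancel(3)[OF s1] by (simp add: c0_def c1_def c2_def)
  qed (use L3_nonneg sfom_eta_pos[of j] in auto)
  finally have E: "norm ?E \<le> L3 * (sfom_eta j)^3 * s^2" .
  have c0: "c0 \<ge> 0" "c0 = 1 - theta_sum (Suc j)"
    using momentum_factor_bounds[OF s1] by (simp_all add: c0_def schedule_Suc s_def)
  have "norm (drift (Suc j) (state (Suc j) \<omega>)) \<le> norm (c0 *\<^sub>R err j \<omega>) + L3 * (sfom_eta j)^3 * s^2"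
    unfolding drift_eq by (rule order_trans[OF norm_triangle_ineq add_left_mono[OF E]])
  then show ?thesis using c0 by (simp add: s_def)
qed

lemma drift_sq_le:
  "(norm (drift (Suc j) (state (Suc j) \<omega>)))\<^sup>2
     \<le> (1 + 1 / sched j) * (1 - theta_sum (Suc j))^2 * (norm (err j \<omega>))\<^sup>2 + 2 * L3^2 / (sched j)^2"
proof -
  define s where "s = sched j"
  have s1: "s \<ge> 1" unfolding s_def by (rule sched_ge_1)
  define c where "c = 1 - theta_sum (Suc j)"
  have c0: "c \<ge> 0" using momentum_factor_bounds[OF s1] by (simp add: c_def schedule_Suc s_def)
  define \<delta> where "\<delta> = L3 * (sfom_eta j)^3 * s^2"
  have "(norm (drift (Suc j) (state (Suc j) \<omega>)))\<^sup>2 \<le> (c * norm (err j \<omega>) + \<delta>)^2"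
    using drift_norm_le[of j \<omega>] by (intro power_mono) (auto simp: c_def \<delta>_def s_def)
  also have "\<dots> \<le> (1 + 1/s) * (c * norm (err j \<omega>))^2 + (1 + s) * \<delta>^2"
    using s1 by (intro square_sum_le_weighted) auto
  also have "(1 + s) * \<delta>^2 \<le> 2 * L3^2 / s^2"
    unfolding \<delta>_def s_def sched_def sfom_eta_def by (rule cubic_step_sq_le) simp
  finally show ?thesis by (simp add: power_mult_distrib c_def s_def mult.assoc)
qed

lemma err_msq_Suc_le:
  "err_msq (Suc j) \<le> ennreal ((1 + 1 / sched j) * (1 - theta_sum (Suc j))^2) * err_msq j
    + ennreal (2 * L3^2 / (sched j)^2 + 25 * \<sigma>^2 / (4 * (sched j)^2))"
proof -
  define s where "s = sched j"
  have s1: "s \<ge> 1" unfolding s_def by (rule sched_ge_1)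
  define a where "a = (1 + 1/s) * (1 - theta_sum (Suc j))^2"
  have noise: "(\<bar>theta_prev (Suc j) 1\<bar> + \<bar>theta_prev (Suc j) 2\<bar>)\<^sup>2 * \<sigma>\<^sup>2 \<le> 25 / (4 * s^2) * \<sigma>\<^sup>2"
    unfolding schedule_Suc(3,4) s_def using weight_abs_sum_sq_le[OF sched_ge_1[of j]]
    by (intro mult_right_mono) auto
  have "err_msq (Suc j) \<le> (\<integral>\<^sup>+\<omega>. ennreal ((norm (drift (Suc j) (state (Suc j) \<omega>)))\<^sup>2) \<partial>M)
       + ennreal ((\<bar>theta_prev (Suc j) 1\<bar> + \<bar>theta_prev (Suc j) 2\<bar>)\<^sup>2 * \<sigma>\<^sup>2)"
    by (rule err_msq_le_drift)
  also have "\<dots> \<le> (ennreal a * err_msq j + ennreal (2 * L3^2 / s^2)) + ennreal (25 / (4 * s^2) * \<sigma>\<^sup>2)"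
    unfolding err_msq_def
    by (intro add_mono ennreal_leI noise P.nn_integral_le_affine)
       (use drift_sq_le s1 in \<open>auto simp: a_def s_def\<close>)
  also have "\<dots> = ennreal a * err_msq j + ennreal (2 * L3^2 / s^2 + 25 * \<sigma>^2 / (4 * s^2))"
    using s1 by (simp add: ennreal_plus[symmetric] add.assoc del: ennreal_plus)
  finally show ?thesis by (simp add: a_def s_def)
qed

lemma err_msq_le: "err_msq k \<le> ennreal (C_err / (real k + 2) powr (3/5))"
proof (induction k)
  case 0
  have "err_msq 0 \<le> (\<integral>\<^sup>+\<omega>. ennreal ((norm (drift 0 (state 0 \<omega>)))\<^sup>2) \<partial>M)
      + ennreal ((\<bar>theta_prev 0 1\<bar> + \<bar>theta_prev 0 2\<bar>)\<^sup>2 * \<sigma>\<^sup>2)"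
    by (rule err_msq_le_drift)
  also have "\<dots> = ennreal (\<sigma>^2)" by (simp add: drift_0 schedule_0)
  also have "\<dots> \<le> ennreal (C_err / (real 0 + 2) powr (3/5))"
  proof (rule ennreal_leI)
    have "(2::real) powr (3/5) \<le> 2 powr 1" by (intro powr_mono) auto
    then have "C_err / 2 \<le> C_err / 2 powr (3/5)" unfolding C_err_def by (intro divide_left_mono) auto
    moreover have "\<sigma>^2 \<le> C_err / 2" unfolding C_err_def by simp
    ultimately have "\<sigma>^2 \<le> C_err / 2 powr (3/5)" by linarith
    then show "\<sigma>^2 \<le> C_err / (real 0 + 2) powr (3/5)" by simp
  qed
  finally show ?case .
next
  case (Suc j)
  define s where "s = sched j"
  define s' where "s' = (real j + 2) powr (3/5)"
  have s1: "s \<ge> 1" unfolding s_def by (rule sched_ge_1)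
  have s': "s' \<ge> 1" "s' \<le> s" "s - s' \<le> 3/5"
  proof -
    show "s' \<ge> 1" unfolding s'_def by (intro ge_one_powr_ge_zero) auto
    show "s' \<le> s" unfolding s'_def s_def sched_def by (intro powr_mono2) auto
    have "real j + 3 - 1 = real j + 2" by simp
    then show "s - s' \<le> 3/5"
      using powr_three_fifths_increment_le[of "real j + 3"] unfolding s_def s'_def sched_def
      by (simp add: add_ac)
  qed
  define \<alpha> where "\<alpha> = (1 + 1/s) * (1 - theta_sum (Suc j))^2"
  have \<alpha>: "0 \<le> \<alpha>" "\<alpha> \<le> 1 - 1/s"
    using momentum_factor_bounds[OF s1] s1 by (auto simp: \<alpha>_def schedule_Suc s_def)
  define B where "B = 2 * L3^2 + 25 * \<sigma>^2 / 4"
  have "err_msq (Suc j) \<le> ennreal \<alpha> * err_msq j + ennreal (2 * L3^2 / s^2 + 25 * \<sigma>^2 / (4 * s^2))"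
    using err_msq_Suc_le[of j] by (simp add: \<alpha>_def s_def)
  also have "\<dots> \<le> ennreal \<alpha> * ennreal (C_err / s') + ennreal (B / s^2)"
    using Suc.IH by (intro add_mono mult_left_mono) (auto simp: s'_def B_def add_divide_distrib)
  also have "\<dots> = ennreal (\<alpha> * (C_err / s') + B / s^2)"
    using \<alpha> s' s1
    by (simp add: ennreal_mult[symmetric] ennreal_plus[symmetric] C_err_def B_def del: ennreal_plus)
  also have "\<dots> \<le> ennreal (C_err / s)"
    by (intro ennreal_leI err_bound_induction_step[OF s' \<alpha>]) (auto simp: B_def C_err_def)
  finally show ?case by (simp add: s_def sched_def add.commute)
qed

section \<open>Descent and the complexity bound\<close>

lemma err_mean_le:
  "(\<integral>\<^sup>+\<omega>. ennreal (norm (err k \<omega>)) \<partial>M) \<le> ennreal ((1 + C_err/4) / (real k + 2) powr (3/10))"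
proof -
  define u where "u = (real k + 2) powr (3/10)"
  have u: "u > 0" unfolding u_def by simp
  have u2: "(real k + 2) powr (3/5) = u^2" unfolding u_def by (simp add: powr_power)
  have C: "C_err \<ge> 0" by (simp add: C_err_def)
  have am_gm: "norm (err k \<omega>) \<le> u/4 * (norm (err k \<omega>))^2 + 1/u" for \<omega>
  proof -
    have "u/4 * (norm (err k \<omega>))^2 + 1/u - norm (err k \<omega>) = (u * norm (err k \<omega>) / 2 - 1)^2 / u"
      using u by (simp add: field_simps power2_eq_square)
    moreover have "(u * norm (err k \<omega>) / 2 - 1)^2 / u \<ge> 0" using u by simp
    ultimately show ?thesis by linarith
  qed
  have "(\<integral>\<^sup>+\<omega>. ennreal (norm (err k \<omega>)) \<partial>M) \<le> ennreal (u/4) * err_msq k + ennreal (1/u)"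
    unfolding err_msq_def by (rule P.nn_integral_le_affine[OF am_gm]) (use u in auto)
  also have "\<dots> \<le> ennreal (u/4) * ennreal (C_err / u^2) + ennreal (1/u)"
    using err_msq_le[of k] by (intro add_right_mono mult_left_mono) (auto simp: u2)
  also have "\<dots> = ennreal ((1 + C_err/4) / u)"
    using u C by (simp add: ennreal_mult[symmetric] ennreal_plus[symmetric] field_simps
        power2_eq_square del: ennreal_plus)
  finally show ?thesis by (simp add: u_def)
qed

text \<open>For \<open>m\<^sup>k = 0\<close> the update divides by zero, which in HOL leaves \<open>x\<^sup>k\<^sup>+\<^sup>1 = x\<^sup>k\<close>; the
inequality holds then as well because \<open>e\<^sub>k = -\<nabla>f(x\<^sup>k)\<close>.\<close>

lemma descent_step:
  "sfom_eta k * norm (g (iter k \<omega>))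
    \<le> f (iter k \<omega>) - f (iter (Suc k) \<omega>) + 2 * sfom_eta k * norm (err k \<omega>) + L1 * (sfom_eta k)^2"
proof -
  define x where "x = iter k \<omega>"
  define m where "m = mom k \<omega>"
  define y where "y = iter (Suc k) \<omega>"
  have e: "err k \<omega> = m - g x" by (simp add: err_def m_def x_def)
  have yx: "y = x - (sfom_eta k / norm m) *\<^sub>R m" by (simp add: y_def x_def m_def iter_Suc)
  have eta: "sfom_eta k > 0" by (rule sfom_eta_pos)
  have desc: "f y \<le> f x + g x \<bullet> (y - x) + L1 * (norm (y - x))^2"
    by (rule lipschitz_gradient_descent_le[OF f_grad g_lipschitz L1_nonneg])
  show ?thesis
  proof (cases "m = 0")
    case True
    then have "y = x" and "err k \<omega> = - g x" using e by (simp_all add: yx)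
    moreover have "0 \<le> sfom_eta k * norm (g x)" "0 \<le> L1 * (sfom_eta k)^2"
      using eta L1_nonneg by auto
    ultimately show ?thesis by (simp add: x_def y_def)
  next
    case False
    then have nm: "norm m > 0" by simp
    have n: "norm (y - x) = sfom_eta k" using eta nm by (simp add: yx)
    have gm: "g x \<bullet> m / norm m \<ge> norm (g x) - 2 * norm (m - g x)"
    proof -
      have "g x \<bullet> m = m \<bullet> m - (m - g x) \<bullet> m" by (simp add: inner_diff_left)
      also have "\<dots> \<ge> (norm m)^2 - norm (m - g x) * norm m"
        using Cauchy_Schwarz_ineq2[of "m - g x" m] by (simp add: dot_square_norm)
      finally have "g x \<bullet> m / norm m \<ge> ((norm m)^2 - norm (m - g x) * norm m) / norm m"
        using nm by (intro divide_right_mono) auto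
      moreover have "((norm m)^2 - norm (m - g x) * norm m) / norm m = norm m - norm (m - g x)"
        using nm by (simp add: field_simps power2_eq_square)
      moreover have "norm (g x) \<le> norm m + norm (m - g x)"
        using norm_triangle_ineq[of m "g x - m"] by (simp add: norm_minus_commute)
      ultimately show ?thesis by linarith
    qed
    have "g x \<bullet> (y - x) = - sfom_eta k * (g x \<bullet> m / norm m)" by (simp add: yx)
    also have "\<dots> \<le> - sfom_eta k * (norm (g x) - 2 * norm (m - g x))"
      using mult_left_mono[OF gm, of "sfom_eta k"] eta by simp
    finally show ?thesis using desc n unfolding e by (simp add: x_def y_def algebra_simps)
  qed
qed

lemma descent_sum:
  "(\<Sum>k<K. sfom_eta k * norm (g (iter k \<omega>)))
    \<le> (f x0 - flow) + (\<Sum>k<K. 2 * sfom_eta k * norm (err k \<omega>) + L1 * (sfom_eta k)^2)"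
proof -
  have "(\<Sum>k<K. sfom_eta k * norm (g (iter k \<omega>)))
      \<le> (\<Sum>k<K. (f (iter k \<omega>) - f (iter (Suc k) \<omega>))
                + (2 * sfom_eta k * norm (err k \<omega>) + L1 * (sfom_eta k)^2))"
    by (intro sum_mono) (use descent_step in \<open>simp add: algebra_simps\<close>)
  also have "\<dots> = (f x0 - f (iter K \<omega>)) + (\<Sum>k<K. 2 * sfom_eta k * norm (err k \<omega>) + L1 * (sfom_eta k)^2)"
    using sum_lessThan_telescope'[of "\<lambda>k. f (iter k \<omega>)" K] by (simp add: sum.distrib iter_0)
  also have "\<dots> \<le> (f x0 - flow) + (\<Sum>k<K. 2 * sfom_eta k * norm (err k \<omega>) + L1 * (sfom_eta k)^2)"
    using f_lower by simp
  finally show ?thesis .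
qed

lemma descent_error_term_mean_le:
  "(\<integral>\<^sup>+\<omega>. ennreal (2 * sfom_eta k * norm (err k \<omega>) + L1 * (sfom_eta k)^2) \<partial>M)
     \<le> ennreal ((2 + C_err/2 + L1) / (real k + 2))"
proof -
  have C: "C_err \<ge> 0" by (simp add: C_err_def)
  have eta: "sfom_eta k > 0" by (rule sfom_eta_pos)
  have "(\<integral>\<^sup>+\<omega>. ennreal (2 * sfom_eta k * norm (err k \<omega>) + L1 * (sfom_eta k)^2) \<partial>M)
      = (\<integral>\<^sup>+\<omega>. ennreal (2 * sfom_eta k) * ennreal (norm (err k \<omega>)) + ennreal (L1 * (sfom_eta k)^2) \<partial>M)"
    using eta L1_nonneg by (intro nn_integral_cong)
      (simp add: ennreal_mult[symmetric] ennreal_plus[symmetric] del: ennreal_plus)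
  also have "\<dots> = ennreal (2 * sfom_eta k) * (\<integral>\<^sup>+\<omega>. ennreal (norm (err k \<omega>)) \<partial>M)
      + ennreal (L1 * (sfom_eta k)^2)"
    by (simp add: nn_integral_add nn_integral_cmult P.emeasure_space_1)
  also have "\<dots> \<le> ennreal (2 * sfom_eta k) * ennreal ((1 + C_err/4) / (real k + 2) powr (3/10))
      + ennreal (L1 * (sfom_eta k)^2)"
    by (intro add_right_mono mult_left_mono err_mean_le) auto
  also have "\<dots> = ennreal ((2 + C_err/2) * (sfom_eta k / (real k + 2) powr (3/10)) + L1 * (sfom_eta k)^2)"
    using eta L1_nonneg C
    by (simp add: ennreal_mult[symmetric] ennreal_plus[symmetric] field_simps del: ennreal_plus)
  also have "\<dots> \<le> ennreal ((2 + C_err/2) * (1 / (real k + 2)) + L1 * (1 / (real k + 2)))"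
    using L1_nonneg C
    by (intro ennreal_leI add_mono mult_left_mono sfom_eta_div_le sfom_eta_sq_le) auto
  also have "(2 + C_err/2) * (1 / (real k + 2)) + L1 * (1 / (real k + 2)) = (2 + C_err/2 + L1) / (real k + 2)"
    by (simp add: add_divide_distrib)
  finally show ?thesis .
qed

lemma weighted_grad_norm_sum_mean_le:
  "(\<integral>\<^sup>+\<omega>. ennreal (\<Sum>k<K. sfom_eta k * norm (g (iter k \<omega>))) \<partial>M)
     \<le> ennreal ((f x0 - flow) + (2 + C_err/2 + L1) * ln (real K + 1))"
proof -
  define a where "a k \<omega> = 2 * sfom_eta k * norm (err k \<omega>) + L1 * (sfom_eta k)^2" for k \<omega>
  define c where "c = 2 + C_err/2 + L1"
  have c: "c \<ge> 0" using L1_nonneg by (simp add: c_def C_err_def)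
  have a0: "a k \<omega> \<ge> 0" for k \<omega> unfolding a_def using sfom_eta_pos[of k] L1_nonneg by auto
  have f0: "f x0 - flow \<ge> 0" using f_lower by simp
  have "(\<integral>\<^sup>+\<omega>. ennreal (\<Sum>k<K. sfom_eta k * norm (g (iter k \<omega>))) \<partial>M)
      \<le> (\<integral>\<^sup>+\<omega>. ennreal (f x0 - flow) + (\<Sum>k<K. ennreal (a k \<omega>)) \<partial>M)"
  proof (rule nn_integral_mono)
    fix \<omega>
    have "ennreal (\<Sum>k<K. sfom_eta k * norm (g (iter k \<omega>))) \<le> ennreal ((f x0 - flow) + (\<Sum>k<K. a k \<omega>))"
      by (rule ennreal_leI) (use descent_sum[where K = K and \<omega> = \<omega>] in \<open>simp add: a_def\<close>)
    also have "\<dots> = ennreal (f x0 - flow) + (\<Sum>k<K. ennreal (a k \<omega>))"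
      using f0 a0 by (simp add: ennreal_plus sum_nonneg)
    finally show "ennreal (\<Sum>k<K. sfom_eta k * norm (g (iter k \<omega>)))
        \<le> ennreal (f x0 - flow) + (\<Sum>k<K. ennreal (a k \<omega>))" .
  qed
  also have "\<dots> = ennreal (f x0 - flow) + (\<Sum>k<K. \<integral>\<^sup>+\<omega>. ennreal (a k \<omega>) \<partial>M)"
    by (simp add: a_def nn_integral_add nn_integral_sum P.emeasure_space_1)
  also have "\<dots> \<le> ennreal (f x0 - flow) + (\<Sum>k<K. ennreal (c * (1 / (real k + 2))))"
    using descent_error_term_mean_le by (intro add_left_mono sum_mono) (simp add: a_def c_def)
  also have "\<dots> = ennreal (f x0 - flow) + ennreal (c * (\<Sum>k<K. 1 / (real k + 2)))"
    using c by (simp add: sum_distrib_left)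
  also have "\<dots> \<le> ennreal (f x0 - flow) + ennreal (c * ln (real K + 1))"
    using c by (intro add_left_mono ennreal_leI mult_left_mono harmonic_shift_le_ln) auto
  also have "\<dots> = ennreal ((f x0 - flow) + c * ln (real K + 1))"
    using f0 c by (simp add: ennreal_plus[symmetric] del: ennreal_plus)
  finally show ?thesis by (simp add: c_def)
qed

lemma grad_norm_avg_le:
  assumes "K > 0"
  shows "(\<Sum>i<K. norm (g (iter i \<omega>))) / real K
    \<le> (\<Sum>i<K. sfom_eta i * norm (g (iter i \<omega>))) / (real K * sfom_eta (K - 1))"
proof -
  have E: "sfom_eta (K - 1) > 0" by (rule sfom_eta_pos)
  have "(\<Sum>i<K. norm (g (iter i \<omega>))) \<le> (\<Sum>i<K. sfom_eta i * norm (g (iter i \<omega>)) / sfom_eta (K - 1))"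
  proof (rule sum_mono)
    fix i assume "i \<in> {..<K}"
    then have "sfom_eta (K - 1) \<le> sfom_eta i" by (intro sfom_eta_antimono) auto
    then show "norm (g (iter i \<omega>)) \<le> sfom_eta i * norm (g (iter i \<omega>)) / sfom_eta (K - 1)"
      using E by (simp add: field_simps mult_right_mono)
  qed
  also have "\<dots> = (\<Sum>i<K. sfom_eta i * norm (g (iter i \<omega>))) / sfom_eta (K - 1)"
    by (rule sum_divide_distrib[symmetric])
  finally have "(\<Sum>i<K. norm (g (iter i \<omega>))) / real K
      \<le> (\<Sum>i<K. sfom_eta i * norm (g (iter i \<omega>))) / sfom_eta (K - 1) / real K"
    by (rule divide_right_mono) simp
  then show ?thesis by (simp add: divide_divide_eq_left mult.commute)
qed

lemma expected_grad_norm_le_log: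
  assumes Kp: "K > 0"
  shows "(\<integral>\<^sup>+ (\<omega>, i). ennreal (norm (g (iter i \<omega>))) \<partial>(M \<Otimes>\<^sub>M measure_pmf (pmf_of_set {..<K})))
    \<le> ennreal ((real K + 2) powr (7/10) / real K
                 * ((f x0 - flow) + (2 + C_err/2 + L1) * ln (real K + 1)))"
proof -
  define w where "w = 1 / (real K * sfom_eta (K - 1))"
  have w: "w > 0" unfolding w_def using Kp sfom_eta_pos[of "K - 1"] by simp
  have w_eq: "w = (real K + 2) powr (7/10) / real K"
    unfolding w_def sfom_eta_def using Kp by (simp add: of_nat_diff add_ac)
  have avg: "(\<Sum>i<K. ennreal (norm (g (iter i \<omega>)))) / of_nat K
      \<le> ennreal w * ennreal (\<Sum>i<K. sfom_eta i * norm (g (iter i \<omega>)))" for \<omega>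
  proof -
    have "(\<Sum>i<K. ennreal (norm (g (iter i \<omega>)))) / of_nat K
        = ennreal ((\<Sum>i<K. norm (g (iter i \<omega>))) / real K)"
      using Kp by (simp add: ennreal_of_nat_eq_real_of_nat, subst divide_ennreal) (auto intro: sum_nonneg)
    also have "\<dots> \<le> ennreal (w * (\<Sum>i<K. sfom_eta i * norm (g (iter i \<omega>))))"
      using grad_norm_avg_le[OF Kp, of \<omega>] by (intro ennreal_leI) (simp add: w_def)
    also have "\<dots> = ennreal w * ennreal (\<Sum>i<K. sfom_eta i * norm (g (iter i \<omega>)))"
      using w by (intro ennreal_mult) (auto intro!: sum_nonneg mult_nonneg_nonneg less_imp_le[OF sfom_eta_pos])
    finally show ?thesis .
  qed
  have "(\<integral>\<^sup>+ (\<omega>, i). ennreal (norm (g (iter i \<omega>))) \<partial>(M \<Otimes>\<^sub>M measure_pmf (pmf_of_set {..<K})))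
      = (\<integral>\<^sup>+\<omega>. (\<Sum>i<K. ennreal (norm (g (iter i \<omega>)))) / of_nat K \<partial>M)"
    by (rule nn_integral_pair_uniform_lessThan[OF Kp]) measurable
  also have "\<dots> \<le> (\<integral>\<^sup>+\<omega>. ennreal w * ennreal (\<Sum>i<K. sfom_eta i * norm (g (iter i \<omega>))) \<partial>M)"
    by (rule nn_integral_mono) (rule avg)
  also have "\<dots> = ennreal w * (\<integral>\<^sup>+\<omega>. ennreal (\<Sum>i<K. sfom_eta i * norm (g (iter i \<omega>))) \<partial>M)"
    by (rule nn_integral_cmult) measurable
  also have "\<dots> \<le> ennreal w * ennreal ((f x0 - flow) + (2 + C_err/2 + L1) * ln (real K + 1))"
    by (intro mult_left_mono weighted_grad_norm_sum_mean_le) auto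
  also have "\<dots> = ennreal (w * ((f x0 - flow) + (2 + C_err/2 + L1) * ln (real K + 1)))"
    using w f_lower L1_nonneg by (intro ennreal_mult[symmetric]) (auto simp: C_err_def)
  finally show ?thesis by (simp add: w_eq)
qed

lemma expected_grad_norm_le:
  assumes \<epsilon>: "0 < \<epsilon>" "\<epsilon> < 1"
    and K: "real K \<ge> max (((20 * (4 * (f x0 - flow + 19 * \<sigma>\<^sup>2 + L1 + 4 * L3\<^sup>2 + 2)) / (3 * \<epsilon>))
        * ln (20 * (4 * (f x0 - flow + 19 * \<sigma>\<^sup>2 + L1 + 4 * L3\<^sup>2 + 2)) / (3 * \<epsilon>))) powr (10/3)) 5"
  shows "(\<integral>\<^sup>+ (\<omega>, i). ennreal (norm (g (iter i \<omega>))) \<partial>(M \<Otimes>\<^sub>M measure_pmf (pmf_of_set {..<K})))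
    \<le> ennreal \<epsilon>"
proof -
  define Q where "Q = f x0 - flow + 19 * \<sigma>\<^sup>2 + L1 + 4 * L3\<^sup>2 + 2"
  have f0: "f x0 - flow \<ge> 0" using f_lower by simp
  have K5: "real K \<ge> 5" using K by simp
  have "(f x0 - flow) + (2 + C_err/2 + L1) * ln (real K + 1) \<le> Q + Q * ln (real K + 1)"
    using f0 L1_nonneg by (intro add_mono mult_right_mono) (auto simp: Q_def C_err_def)
  also have "\<dots> = Q * (1 + ln (real K + 1))" by (simp add: distrib_left)
  finally have "(real K + 2) powr (7/10) / real K * ((f x0 - flow) + (2 + C_err/2 + L1) * ln (real K + 1))
      \<le> (real K + 2) powr (7/10) / real K * (Q * (1 + ln (real K + 1)))"
    using K5 by (intro mult_left_mono) auto
  also have "\<dots> = Q * (1 + ln (real K + 1)) * (real K + 2) powr (7/10) / real K"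
    by (simp add: ac_simps)
  also have "\<dots> \<le> \<epsilon>"
    using f0 L1_nonneg K by (intro complexity_arithmetic[OF _ \<epsilon> K5]) (auto simp: Q_def)
  finally show ?thesis
    using K5 by (intro order_trans[OF expected_grad_norm_le_log ennreal_leI]) auto
qed

end

theorem theorem3p4:
  fixes f :: "'a::euclidean_space \<Rightarrow> real"
    and g :: "'a \<Rightarrow> 'a"
    and G :: "'a \<Rightarrow> 'b \<Rightarrow> 'a"
    and D :: "'b measure"
    and M :: "'w measure"
    and \<xi> :: "nat \<Rightarrow> 'w \<Rightarrow> 'b"
    and x0 :: 'a
    and flow L1 L3 \<sigma> :: real
  defines "\<eta> \<equiv> (\<lambda>k. 1 / (real k + 3) powr (7/10))"
    and "\<gamma> \<equiv> (\<lambda>k t. if t = 1 then 1 / (real k + 3) powr (3/5)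
                     else 1 / (2 * (real k + 3) powr (3/5)))"
    and "\<theta> \<equiv> (\<lambda>k t. if t = 1 then (2 * (real k + 3) powr (3/5) - 1) / (real k + 3) powr (6/5)
                     else (1 - (real k + 3) powr (3/5)) / (2 * (real k + 3) powr (6/5)))"
    and "M3 \<equiv> 4 * (f x0 - flow + 19 * \<sigma>\<^sup>2 + L1 + 4 * L3\<^sup>2 + 2)"
  assumes A_low: "\<forall>x. f x \<ge> flow"
    and A_grad: "\<forall>x. (f has_derivative (\<lambda>h. g x \<bullet> h)) (at x)"
    and A_L1: "L1 > 0" "\<forall>x y. norm (g y - g x) \<le> L1 * norm (y - x)"
    and A_prob: "prob_space D"
    and A_Gmeas: "(\<lambda>(x, s). G x s) \<in> borel_measurable (borel \<Otimes>\<^sub>M D)"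
    and A_unbiased: "\<forall>x. integrable D (G x) \<and> (\<integral>s. G x s \<partial>D) = g x"
    and A_var: "\<sigma> > 0" "\<forall>x. (\<integral>\<^sup>+ s. ennreal ((norm (G x s - g x))\<^sup>2) \<partial>D) \<le> ennreal (\<sigma>\<^sup>2)"
    and B: "assumptionB3 f g L3"
    and M: "prob_space M"
    and xi_dist: "\<forall>k. distr M D (\<xi> k) = D"
    and xi_indep: "prob_space.indep_vars M (\<lambda>_. D) \<xi> UNIV"
    and m_nonzero: "\<forall>k. AE \<omega> in M. sfom_m G \<xi> \<eta> 2 \<gamma> \<theta> x0 k \<omega> \<noteq> 0"
  shows "\<forall>\<epsilon>. 0 < \<epsilon> \<and> \<epsilon> < 1 \<longrightarrow>
     (\<forall>K::nat. real K \<ge> max (((20 * M3 / (3 * \<epsilon>)) * ln (20 * M3 / (3 * \<epsilon>))) powr (10/3)) 5 \<longrightarrow>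
        (\<integral>\<^sup>+ (\<omega>, i). ennreal (norm (g (sfom_x G \<xi> \<eta> 2 \<gamma> \<theta> x0 i \<omega>)))
            \<partial>(M \<Otimes>\<^sub>M measure_pmf (pmf_of_set {..<K}))) \<le> ennreal \<epsilon>)"
proof (intro allI impI)
  fix \<epsilon> :: real and K :: nat
  assume \<epsilon>: "0 < \<epsilon> \<and> \<epsilon> < 1"
    and K: "real K \<ge> max (((20 * M3 / (3 * \<epsilon>)) * ln (20 * M3 / (3 * \<epsilon>))) powr (10/3)) 5"
  obtain D2 D3 where "L3 > 0"
    and "\<forall>x h1. ((\<lambda>y. g y \<bullet> h1) has_derivative (\<lambda>h2. D2 x h1 h2)) (at x)"
    and "\<forall>x h1 h2. ((\<lambda>y. D2 y h1 h2) has_derivative (\<lambda>h3. D3 x h1 h2 h3)) (at x)"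
    and "\<forall>x y h1 h2 h3. norm h1 \<le> 1 \<longrightarrow> norm h2 \<le> 1 \<longrightarrow> norm h3 \<le> 1 \<longrightarrow>
          D3 y h1 h2 h3 - D3 x h1 h2 h3 \<le> L3 * norm (y - x)"
    using B unfolding assumptionB3_def by blast
  note facts = this M A_prob xi_dist xi_indep A_Gmeas A_unbiased A_var A_low A_grad A_L1
  interpret S: sfom_analysis M D \<xi> G g \<sigma> f x0 flow L1 L3 D2 D3
    by (intro sfom_analysis.intro iid_sequence.intro iid_sequence_axioms.intro unbiased_oracle.intro
        unbiased_oracle_axioms.intro sfom_analysis_axioms.intro)
       (fact facts | rule less_imp_le, fact facts)+
  have iter: "sfom_x G \<xi> \<eta> 2 \<gamma> \<theta> x0 i \<omega> = S.iter i \<omega>" for i \<omega>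
    unfolding sfom_x_def S.iter_def S.state_def \<eta>_def \<gamma>_def \<theta>_def
      sfom_eta_def sfom_gamma_def sfom_theta_def ..
  show "(\<integral>\<^sup>+ (\<omega>, i). ennreal (norm (g (sfom_x G \<xi> \<eta> 2 \<gamma> \<theta> x0 i \<omega>)))
      \<partial>(M \<Otimes>\<^sub>M measure_pmf (pmf_of_set {..<K}))) \<le> ennreal \<epsilon>"
    unfolding iter by (rule S.expected_grad_norm_le) (use \<epsilon> K in \<open>auto simp: M3_def\<close>)
qed

end
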